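(* Let $T\ge 2$ and let the standing assumptions hold. Suppose that for some $\alpha\in[1/T,1]$ every $f_t$, $t=1,\dots,T$, is $\alpha$-exp-concave on $\mathcal{X}$. Let $\widehat{\alpha}\in\mathcal{P}_{exp}$ satisfy $\widehat{\alpha}\le\alpha\le2\widehat{\alpha}$ and let $\beta=\frac12\min\{\frac{1}{4GD},\alpha\}$. Then USC satisfies \[ \sum_{t=1}^T f_t(\mathbf{x}_t)-\min_{\mathbf{x}\in\mathcal{X}}\sum_{t=1}^T f_t(\mathbf{x})\le \min_{A\in\mathcal{A}_{exp}} R(A,\widehat{\alpha}) + 2\Gamma GD\left(2+\frac{1}{\sqrt{\ln|\mathcal{E}|}}\right)+\frac{\Gamma^2}{2\beta\ln|\mathcal{E}|}. \] In particular, when $|\mathcal{A}_{str}|,|\mathcal{A}_{exp}|,|\mathcal{A}_{con}|$ are bounded by constants, the additive term is $O\big(\frac{\log\log T}{\alpha}\big)$.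
   Context: Setting (online convex optimization): $\mathcal{X}\subset\mathbb{R}^d$ is a nonempty closed convex set with $\max_{\mathbf{x},\mathbf{y}\in\mathcal{X}}\|\mathbf{x}-\mathbf{y}\|\le D$. For $t=1,\dots,T$, $f_t:\mathcal{X}\to\mathbb{R}$ are convex differentiable functions with $\max_{\mathbf{x}\in\mathcal{X}}\|\nabla f_t(\mathbf{x})\|\le G$. At round $t$ a learner outputs $\mathbf{x}_t\in\mathcal{X}$ depending only on $f_1,\dots,f_{t-1}$, then $f_t$ is revealed. An online algorithm (expert) is any such procedure. A function $f$ is $\alpha$-exp-concave on $\mathcal{X}$ if $\mathbf{x}\mapsto\exp(-\alpha f(\mathbf{x}))$ is concave on $\mathcal{X}$. Algorithm USC: Let $N=\lceil\log_2T\rceil$ and $\mathcal{P}_{str}=\mathcal{P}_{exp}=\{2^k/T: k=0,1,\dots,N\}$. Let $\mathcal{A}_{str},\mathcal{A}_{exp}$ be finite sets of online algorithms each taking a positive parameter, and $\mathcal{A}_{con}$ a finite set of online algorithms. The expert set $\mathcal{E}$ consists of the experts $E(A,\lambda')$ ($A$ run with parameter $\lambda'$) for $A\in\mathcal{A}_{str},\lambda'\in\mathcal{P}_{str}$; $E(A,\alpha')$ for $A\in\mathcal{A}_{exp},\alpha'\in\mathcal{P}_{exp}$; and $E(A)$ for $A\in\mathcal{A}_{con}$. Index them $E^1,\dots,E^{|\mathcal{E}|}$; every expert receives the full functions $f_1,f_2,\dots$ and outputs $\mathbf{x}_t^i\in\mathcal{X}$ at round $t$. Fix any $\bar{\mathbf{x}}\in\mathcal{X}$.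 USC outputs $\mathbf{x}_t=\sum_i p_t^i\mathbf{x}_t^i$ with weights given by Adapt-ML-Prod on the losses $\ell_t^i=\frac{\langle\nabla f_t(\mathbf{x}_t),\mathbf{x}_t^i-\bar{\mathbf{x}}\rangle+GD}{2GD}\in[0,1]$, $\ell_t=\sum_ip_t^i\ell_t^i$: namely $p_t^i=\eta_{t-1}^iw_{t-1}^i/\sum_j\eta_{t-1}^jw_{t-1}^j$, where $\eta_{t-1}^i=\min\{\frac12,\sqrt{\ln|\mathcal{E}|/(1+\sum_{s=1}^{t-1}(\ell_s-\ell_s^i)^2)}\}$ for $t\ge1$, $w_0^i=1/|\mathcal{E}|$, and $w_{t-1}^i=\big(w_{t-2}^i(1+\eta_{t-2}^i(\ell_{t-1}-\ell_{t-1}^i))\big)^{\eta_{t-1}^i/\eta_{t-2}^i}$ for $t\ge2$. Define $\Gamma=3\ln|\mathcal{E}|+\ln\big(1+\frac{|\mathcal{E}|}{2e}(1+\ln(T+1))\big)$. For $A\in\mathcal{A}_{exp}$ and $\alpha'>0$, $R(A,\alpha')$ denotes a regret bound of $A$: a number such that whenever $f_1,\dots,f_T$ satisfy the setting and are all $\alpha'$-exp-concave, the outputs $\mathbf{y}_t$ of $A$ run with parameter $\alpha'$ satisfy $\sum_t f_t(\mathbf{y}_t)-\min_{\mathbf{x}\in\mathcal{X}}\sum_tf_t(\mathbf{x})\le R(A,\alpha')$. *)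

theory Defs
  imports "HOL-Analysis.Analysis"
begin

text \<open>An online algorithm (expert) maps the list of previously revealed functions
  [f_1, ..., f_(t-1)] to its output at round t.  Parametrised algorithms additionally
  take a positive real parameter.\<close>

type_synonym 'a alg = "('a \<Rightarrow> real) list \<Rightarrow> 'a"
type_synonym 'a palg = "real \<Rightarrow> ('a \<Rightarrow> real) list \<Rightarrow> 'a"

definition hist :: "(nat \<Rightarrow> 'a \<Rightarrow> real) \<Rightarrow> nat \<Rightarrow> ('a \<Rightarrow> real) list" where
  "hist f t = map f [1..<t]"

definition exp_concave_on :: "real \<Rightarrow> 'a::real_vector set \<Rightarrow> ('a \<Rightarrow> real) \<Rightarrow> bool" where
  "exp_concave_on \<alpha> X h \<longleftrightarrow> concave_on X (\<lambda>x. exp (- \<alpha> * h x))"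

definition oco_domain :: "'a::euclidean_space set \<Rightarrow> real \<Rightarrow> bool" where
  "oco_domain X D \<longleftrightarrow> X \<noteq> {} \<and> closed X \<and> convex X \<and> (\<forall>x\<in>X. \<forall>y\<in>X. norm (x - y) \<le> D)"

definition oco_fns :: "'a::euclidean_space set \<Rightarrow> real \<Rightarrow> nat \<Rightarrow> (nat \<Rightarrow> 'a \<Rightarrow> real) \<Rightarrow> (nat \<Rightarrow> 'a \<Rightarrow> 'a) \<Rightarrow> bool" where
  "oco_fns X G T f g \<longleftrightarrow> (\<forall>t\<in>{1..T}. convex_on X (f t) \<and>
      (\<forall>x\<in>X. (f t has_derivative (\<lambda>h. inner (g t x) h)) (at x within X) \<and> norm (g t x) \<le> G))"

definition regret :: "'a set \<Rightarrow> nat \<Rightarrow> (nat \<Rightarrow> 'a \<Rightarrow> real) \<Rightarrow> (nat \<Rightarrow> 'a) \<Rightarrow> real" where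
  "regret X T f y = (\<Sum>t=1..T. f t (y t)) - (INF x\<in>X. \<Sum>t=1..T. f t x)"

definition usc_N :: "nat \<Rightarrow> nat" where
  "usc_N T = nat \<lceil>log 2 (real T)\<rceil>"

definition usc_grid :: "nat \<Rightarrow> real set" where
  "usc_grid T = {2 ^ k / real T | k. k \<le> usc_N T}"

datatype 'a expert =
    EStr "'a palg" real
  | EExp "'a palg" real
  | ECon "'a alg"

fun expert_out :: "'a expert \<Rightarrow> 'a alg" where
  "expert_out (EStr A l) = A l"
| "expert_out (EExp A a) = A a"
| "expert_out (ECon A) = A"

definition usc_experts :: "nat \<Rightarrow> 'a palg set \<Rightarrow> 'a palg set \<Rightarrow> 'a alg set \<Rightarrow> 'a expert set" where
  "usc_experts T As Ae Ac =
     {EStr A l | A l. A \<in> As \<and> l \<in> usc_grid T}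
   \<union> {EExp A a | A a. A \<in> Ae \<and> a \<in> usc_grid T}
   \<union> ECon ` Ac"

text \<open>L s i = loss l_s^i of expert i at round s, l s = mixed loss l_s; n = number of experts.\<close>

definition amlp_eta :: "nat \<Rightarrow> (nat \<Rightarrow> 'e \<Rightarrow> real) \<Rightarrow> (nat \<Rightarrow> real) \<Rightarrow> nat \<Rightarrow> 'e \<Rightarrow> real" where
  "amlp_eta n L l t i = min (1/2) (sqrt (ln (real n) / (1 + (\<Sum>s=1..t. (l s - L s i)^2))))"

fun amlp_w :: "nat \<Rightarrow> (nat \<Rightarrow> 'e \<Rightarrow> real) \<Rightarrow> (nat \<Rightarrow> real) \<Rightarrow> nat \<Rightarrow> 'e \<Rightarrow> real" where
  "amlp_w n L l 0 i = 1 / real n"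
| "amlp_w n L l (Suc t) i =
     (amlp_w n L l t i * (1 + amlp_eta n L l t i * (l (Suc t) - L (Suc t) i)))
       powr (amlp_eta n L l (Suc t) i / amlp_eta n L l t i)"

definition amlp_p :: "'e set \<Rightarrow> (nat \<Rightarrow> 'e \<Rightarrow> real) \<Rightarrow> (nat \<Rightarrow> real) \<Rightarrow> nat \<Rightarrow> 'e \<Rightarrow> real" where
  "amlp_p E L l t i =
     amlp_eta (card E) L l (t - 1) i * amlp_w (card E) L l (t - 1) i /
     (\<Sum>j\<in>E. amlp_eta (card E) L l (t - 1) j * amlp_w (card E) L l (t - 1) j)"

definition usc_point :: "'a::euclidean_space expert set \<Rightarrow> (nat \<Rightarrow> 'a \<Rightarrow> real) \<Rightarrow>
    (nat \<Rightarrow> 'a expert \<Rightarrow> real) \<Rightarrow> (nat \<Rightarrow> real) \<Rightarrow> nat \<Rightarrow> 'a" where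
  "usc_point E f L l t = (\<Sum>i\<in>E. amlp_p E L l t i *\<^sub>R expert_out i (hist f t))"

text \<open>usc_state ... t = the loss vectors and mixed losses of rounds 1..t.\<close>
fun usc_state :: "'a::euclidean_space expert set \<Rightarrow> (nat \<Rightarrow> 'a \<Rightarrow> real) \<Rightarrow> (nat \<Rightarrow> 'a \<Rightarrow> 'a) \<Rightarrow>
    real \<Rightarrow> real \<Rightarrow> 'a \<Rightarrow> nat \<Rightarrow> (nat \<Rightarrow> 'a expert \<Rightarrow> real) \<times> (nat \<Rightarrow> real)" where
  "usc_state E f g G D xbar 0 = ((\<lambda>_ _. 0), (\<lambda>_. 0))"
| "usc_state E f g G D xbar (Suc t) =
     (let (L, l) = usc_state E f g G D xbar t;
          r = Suc t;
          x = usc_point E f L l r;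
          Lr = (\<lambda>i. (inner (g r x) (expert_out i (hist f r) - xbar) + G * D) / (2 * G * D));
          lr = (\<Sum>i\<in>E. amlp_p E L l r i * Lr i)
      in (L(r := Lr), l(r := lr)))"

definition usc_x :: "'a::euclidean_space expert set \<Rightarrow> (nat \<Rightarrow> 'a \<Rightarrow> real) \<Rightarrow> (nat \<Rightarrow> 'a \<Rightarrow> 'a) \<Rightarrow>
    real \<Rightarrow> real \<Rightarrow> 'a \<Rightarrow> nat \<Rightarrow> 'a" where
  "usc_x E f g G D xbar t =
     (let (L, l) = usc_state E f g G D xbar (t - 1) in usc_point E f L l t)"

definition usc_Gamma :: "nat \<Rightarrow> nat \<Rightarrow> real" where
  "usc_Gamma n T = 3 * ln (real n) + ln (1 + real n / (2 * exp 1) * (1 + ln (real T + 1)))"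

definition usc_beta :: "real \<Rightarrow> real \<Rightarrow> real \<Rightarrow> real" where
  "usc_beta G D \<alpha> = 1/2 * min (1 / (4 * G * D)) \<alpha>"

definition usc_add :: "nat \<Rightarrow> nat \<Rightarrow> real \<Rightarrow> real \<Rightarrow> real \<Rightarrow> real" where
  "usc_add n T G D \<alpha> =
     2 * usc_Gamma n T * G * D * (2 + 1 / sqrt (ln (real n)))
     + (usc_Gamma n T)^2 / (2 * usc_beta G D \<alpha> * ln (real n))"

end

theory Submission
  imports Defs
begin

text \<open>On the surrogate losses l_t^i, Adapt-ML-Prod has a second-order regret bound against
  every expert k: the regret is at most Gamma / sqrt (ln |E|) * sqrt (1 + sum_t (l_t - l_t^k)^2)
  + 2 Gamma. The surrogate losses are affine in the prediction, so 2 G D (l_t - l_t^k) is the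
  linearised regret <grad f_t(x_t), x_t - x_t^k>, and exp-concavity bounds the true regret of
  round t by this linear term minus 2 beta (G D)^2 (l_t - l_t^k)^2. By AM-GM the negative
  quadratic absorbs the square root. Taking k to be the best algorithm of A_exp run with the
  grid parameter alpha-hat \<le> alpha (the losses are also alpha-hat-exp-concave) adds its bound
  R(A, alpha-hat). Finally |E| = O(log T), which makes the additive term O(log log T / alpha).\<close>

lemma ln_ge_half: "(2::real) \<le> x \<Longrightarrow> 1/2 \<le> ln x"
  using ln2_ge_two_thirds ln_le_cancel_iff[of 2 x] by linarith

lemma ln_one_plus_lower_bound:
  fixes x :: real assumes "-(1/2) \<le> x" "x \<le> 1/2"
  shows "x - x^2 \<le> ln (1 + x)"
proof (cases "0 \<le> x")
  case True
  then show ?thesis using ln_one_plus_pos_lower_bound[of x] assms by simp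
next
  case False
  let ?g = "\<lambda>y::real. ln (1 + y) - y + y^2"
  have "?g 0 \<le> ?g x"
  proof (rule DERIV_nonpos_imp_nonincreasing[of x 0 ?g])
    show "x \<le> 0" using False by simp
    fix y :: real assume y: "x \<le> y" "y \<le> 0"
    have pos: "1 + y > 0" using y assms by simp
    have "DERIV ?g y :> y * (1 + 2 * y) / (1 + y)"
      using pos by (auto intro!: derivative_eq_intros simp: power2_eq_square field_simps)
    moreover have "y * (1 + 2 * y) / (1 + y) \<le> 0"
      using y assms pos by (intro divide_nonpos_pos mult_nonpos_nonneg) auto
    ultimately show "\<exists>d. DERIV ?g y :> d \<and> d \<le> 0" by blast
  qed
  then show ?thesis by simp
qed

lemma ln_one_minus_upper_bound:
  fixes u :: real assumes "\<bar>u\<bar> \<le> 1/4"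
  shows "ln (1 - u) \<le> - u - u^2 / 4"
proof -
  let ?g = "\<lambda>y::real. - y - y^2 / 4 - ln (1 - y)"
  have der: "DERIV ?g y :> y * (1 + y) / (2 * (1 - y))" if y: "\<bar>y\<bar> \<le> 1/4" for y
  proof -
    have "1 - y > 0" using y by simp
    then show ?thesis by (auto intro!: derivative_eq_intros simp: power2_eq_square field_simps)
  qed
  have "?g 0 \<le> ?g u"
  proof (cases "0 \<le> u")
    case True
    show ?thesis
    proof (rule DERIV_nonneg_imp_nondecreasing[OF True])
      fix y :: real assume y: "0 \<le> y" "y \<le> u"
      with assms have "\<bar>y\<bar> \<le> 1/4" "0 \<le> y * (1 + y) / (2 * (1 - y))" by auto
      with der show "\<exists>d. DERIV ?g y :> d \<and> 0 \<le> d" by blast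
    qed
  next
    case False
    show ?thesis
    proof (rule DERIV_nonpos_imp_nonincreasing[of u 0])
      show "u \<le> 0" using False by simp
      fix y :: real assume y: "u \<le> y" "y \<le> 0"
      with assms have ya: "\<bar>y\<bar> \<le> 1/4" by simp
      with y have "y * (1 + y) / (2 * (1 - y)) \<le> 0"
        by (intro divide_nonpos_nonneg mult_nonpos_nonneg) auto
      with der[OF ya] show "\<exists>d. DERIV ?g y :> d \<and> d \<le> 0" by blast
    qed
  qed
  then show ?thesis by simp
qed

lemma neg_mult_ln_le_inverse_exp:
  fixes z :: real assumes "z > 0" shows "- (z * ln z) \<le> 1 / exp 1"
proof -
  obtain s where s: "z = exp s" using assms by (metis exp_ln)
  have "- s \<le> exp (-(s + 1))" using exp_ge_add_one_self[of "-(s + 1)"] by simp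
  then have "exp s * (- s) \<le> exp s * exp (-(s + 1))" by (intro mult_left_mono) auto
  also have "exp s * exp (-(s + 1)) = 1 / exp 1"
    by (simp add: mult_exp_exp exp_minus divide_inverse)
  finally show ?thesis using s by simp
qed

text \<open>This is where the decreasing learning rates of Adapt-ML-Prod are paid for.\<close>
lemma powr_le_self_add:
  fixes y a :: real assumes y: "y > 0" and a: "0 < a" "a \<le> 1"
  shows "y powr a \<le> y + (1/a - 1) / exp 1"
proof -
  define z where "z = y powr a"
  define b where "b = 1/a"
  have z: "z > 0" using y by (simp add: z_def)
  have b1: "b \<ge> 1" using a by (simp add: b_def)
  have yz: "y = z powr b" using a y by (simp add: z_def b_def powr_powr)
  have "1 + (b - 1) * ln z \<le> z powr (b - 1)"
    using z exp_ge_add_one_self[of "(b - 1) * ln z"] by (simp add: powr_def)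
  then have "z * (1 + (b - 1) * ln z) \<le> z * z powr (b - 1)" using z by (simp add: mult_left_mono)
  also have "z * z powr (b - 1) = y" using z yz by (simp add: powr_diff)
  finally have "z + (b - 1) * (z * ln z) \<le> y" by (simp add: algebra_simps)
  moreover have "(b - 1) * (- (z * ln z)) \<le> (b - 1) * (1 / exp 1)"
    using neg_mult_ln_le_inverse_exp[OF z] b1 by (intro mult_left_mono) auto
  ultimately have "z \<le> y + (b - 1) / exp 1" by (simp add: algebra_simps)
  then show ?thesis unfolding z_def b_def .
qed

lemma sqrt_one_plus_le: "0 \<le> (x::real) \<Longrightarrow> sqrt (1 + x) \<le> 1 + x / 2"
  by (rule real_le_lsqrt) (auto simp: power2_eq_square algebra_simps)

lemma divide_sqrt_le_sqrt_increment:
  fixes a A :: real assumes "0 \<le> a" "a \<le> 1" "0 \<le> A"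
  shows "a / sqrt (1 + A) \<le> 3 * (sqrt (1 + (A + a)) - sqrt (1 + A))"
proof -
  define u where "u = sqrt (1 + A)"
  define v where "v = sqrt (1 + (A + a))"
  have u: "u \<ge> 1" and uv: "u \<le> v" using assms by (simp_all add: u_def v_def)
  have "v \<le> sqrt (4 * (1 + A))" unfolding v_def using assms by (intro real_sqrt_le_mono) simp
  also have "sqrt (4 * (1 + A)) = 2 * u" unfolding u_def by (subst real_sqrt_mult) simp
  finally have v2: "v \<le> 2 * u" .
  have "a = (v - u) * (v + u)"
    using assms by (simp add: u_def v_def algebra_simps)
  then have "a / u = (v - u) * (v + u) / u" by simp
  also have "\<dots> \<le> (v - u) * (3 * u) / u"
    using uv v2 u by (intro divide_right_mono mult_left_mono) auto
  also have "\<dots> = 3 * (v - u)" using u by simp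
  finally show ?thesis by (simp add: u_def v_def)
qed

lemma divide_le_ln_increment:
  fixes a A :: real assumes "0 \<le> a" "a \<le> 1" "0 \<le> A"
  shows "a / (1 + A) \<le> (ln (1 + (A + a)) - ln (1 + A)) + (1 / (1 + A) - 1 / (1 + (A + a)))"
proof -
  have p: "1 + A > 0" "1 + (A + a) > 0" using assms by auto
  have "ln ((1 + A) / (1 + (A + a))) \<le> (1 + A) / (1 + (A + a)) - 1"
    using p by (intro ln_le_minus_one) simp
  then have h: "a / (1 + (A + a)) \<le> ln (1 + (A + a)) - ln (1 + A)"
    using p by (simp add: ln_div field_simps)
  have "a * a \<le> a" using assms by (simp add: mult_left_le)
  then have "a * a / ((1 + A) * (1 + (A + a))) \<le> a / ((1 + A) * (1 + (A + a)))"
    using p by (intro divide_right_mono) auto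
  moreover have "a / (1 + A) - a / (1 + (A + a)) = a * a / ((1 + A) * (1 + (A + a)))"
    and "1 / (1 + A) - 1 / (1 + (A + a)) = a / ((1 + A) * (1 + (A + a)))"
    using p by (simp_all add: field_simps)
  ultimately show ?thesis using h by linarith
qed

section \<open>Adapt-ML-Prod\<close>

lemma amlp_eta_pos:
  assumes "2 \<le> n" shows "0 < amlp_eta n L l t i"
proof -
  have "1/2 \<le> ln (real n)" using assms by (intro ln_ge_half) simp
  moreover have "0 \<le> (\<Sum>s=1..t. (l s - L s i)^2)" by (intro sum_nonneg) simp
  ultimately show ?thesis by (simp add: amlp_eta_def)
qed

lemma amlp_eta_le_half: "amlp_eta n L l t i \<le> 1/2"
  by (simp add: amlp_eta_def)

lemma amlp_eta_mult_abs_le_half: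
  assumes "2 \<le> n" "\<bar>r\<bar> \<le> 1" shows "\<bar>amlp_eta n L l t i * r\<bar> \<le> 1/2"
proof -
  have "\<bar>amlp_eta n L l t i * r\<bar> = amlp_eta n L l t i * \<bar>r\<bar>"
    by (simp add: abs_mult abs_of_pos[OF amlp_eta_pos[OF assms(1)]])
  also have "\<dots> \<le> 1/2 * 1"
    using amlp_eta_pos[OF assms(1)] amlp_eta_le_half assms(2) by (intro mult_mono) auto
  finally show ?thesis by simp
qed

lemma amlp_eta_Suc_le:
  assumes "2 \<le> n" shows "amlp_eta n L l (Suc t) i \<le> amlp_eta n L l t i"
proof -
  define S where "S = (\<Sum>s=1..t. (l s - L s i)^2)"
  define a where "a = (l (Suc t) - L (Suc t) i)^2"
  have "0 \<le> S" "0 \<le> a" unfolding S_def a_def by (auto intro: sum_nonneg)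
  then have "ln (real n) / (1 + (S + a)) \<le> ln (real n) / (1 + S)"
    using assms by (intro divide_left_mono mult_pos_pos) auto
  then show ?thesis by (simp add: amlp_eta_def sum.nat_ivl_Suc' S_def a_def min_le_iff_disj)
qed

lemma amlp_p_distribution:
  assumes "finite E" "2 \<le> card E" and w: "\<forall>i\<in>E. 0 < amlp_w (card E) L l (t - 1) i"
  shows "(\<forall>i\<in>E. 0 \<le> amlp_p E L l t i) \<and> (\<Sum>i\<in>E. amlp_p E L l t i) = 1"
proof -
  let ?Z = "\<Sum>j\<in>E. amlp_eta (card E) L l (t - 1) j * amlp_w (card E) L l (t - 1) j"
  have pos: "0 < amlp_eta (card E) L l (t - 1) i * amlp_w (card E) L l (t - 1) i" if "i \<in> E" for i
    by (rule mult_pos_pos[OF amlp_eta_pos[OF assms(2)]]) (use w that in blast)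
  have "E \<noteq> {}" using assms(2) by auto
  then have Z: "?Z > 0" using assms(1) pos by (intro sum_pos) auto
  have "\<forall>i\<in>E. 0 \<le> amlp_p E L l t i"
    using pos Z by (simp add: amlp_p_def less_imp_le)
  moreover have "(\<Sum>i\<in>E. amlp_p E L l t i) = ?Z / ?Z"
    unfolding amlp_p_def by (rule sum_divide_distrib[symmetric])
  ultimately show ?thesis using Z by simp
qed

locale adapt_ml_prod =
  fixes E :: "'e set" and L :: "nat \<Rightarrow> 'e \<Rightarrow> real" and l :: "nat \<Rightarrow> real" and T :: nat
  assumes finite_experts: "finite E" and two_experts: "2 \<le> card E"
    and loss_range: "\<And>t i. t \<in> {1..T} \<Longrightarrow> i \<in> E \<Longrightarrow> 0 \<le> L t i \<and> L t i \<le> 1"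
    and mixed_loss: "\<And>t. t \<in> {1..T} \<Longrightarrow> l t = (\<Sum>i\<in>E. amlp_p E L l t i * L t i)"
begin

abbreviation "eta \<equiv> amlp_eta (card E) L l"
abbreviation "wgt \<equiv> amlp_w (card E) L l"
abbreviation "wgt_sum t \<equiv> \<Sum>i\<in>E. wgt t i"
abbreviation "sq_sum t i \<equiv> \<Sum>s=1..t. (l s - L s i)^2"

lemma ln_card_ge_half: "1/2 \<le> ln (real (card E))"
  using two_experts by (intro ln_ge_half) simp

lemma eta_eq: "eta t i = min (1/2) (sqrt (ln (card E) / (1 + sq_sum t i)))"
  by (simp add: amlp_eta_def)

lemma eta_pos: "0 < eta t i"
  by (rule amlp_eta_pos[OF two_experts])

lemma eta_Suc_le: "eta (Suc t) i \<le> eta t i"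
  by (rule amlp_eta_Suc_le[OF two_experts])

lemma sq_sum_nonneg: "0 \<le> sq_sum t i"
  by (intro sum_nonneg) simp

lemma sq_sum_Suc: "sq_sum (Suc t) i = sq_sum t i + (l (Suc t) - L (Suc t) i)^2"
  by (simp add: sum.nat_ivl_Suc')

lemma mixed_loss_range:
  assumes t: "t \<in> {1..T}" and w: "\<forall>i\<in>E. 0 < wgt (t - 1) i"
  shows "0 \<le> l t \<and> l t \<le> 1"
proof -
  note p = amlp_p_distribution[OF finite_experts two_experts w]
  have "0 \<le> (\<Sum>i\<in>E. amlp_p E L l t i * L t i)"
    using p loss_range[OF t] by (intro sum_nonneg mult_nonneg_nonneg) auto
  moreover have "(\<Sum>i\<in>E. amlp_p E L l t i * L t i) \<le> (\<Sum>i\<in>E. amlp_p E L l t i * 1)"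
    using p loss_range[OF t] by (intro sum_mono mult_left_mono) auto
  ultimately show ?thesis using p mixed_loss[OF t] by simp
qed

lemma weights_pos: "t \<le> T \<Longrightarrow> i \<in> E \<Longrightarrow> 0 < wgt t i"
proof (induction t arbitrary: i)
  case 0
  then show ?case using two_experts by simp
next
  case (Suc t)
  have t: "Suc t \<in> {1..T}" using Suc by simp
  have "0 \<le> l (Suc t) \<and> l (Suc t) \<le> 1" using mixed_loss_range[OF t] Suc by simp
  then have "\<bar>eta t i * (l (Suc t) - L (Suc t) i)\<bar> \<le> 1/2"
    using loss_range[OF t Suc.prems(2)] two_experts by (intro amlp_eta_mult_abs_le_half) auto
  then have "0 < 1 + eta t i * (l (Suc t) - L (Suc t) i)" by linarith
  moreover have "0 < wgt t i" using Suc by simp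
  ultimately show ?case by simp
qed

lemma weights_distribution:
  assumes "t \<in> {1..T}"
  shows "(\<forall>i\<in>E. 0 \<le> amlp_p E L l t i) \<and> (\<Sum>i\<in>E. amlp_p E L l t i) = 1"
  using assms weights_pos[of "t - 1"] by (intro amlp_p_distribution[OF finite_experts two_experts]) auto

lemma regret_abs_le: "t \<in> {1..T} \<Longrightarrow> i \<in> E \<Longrightarrow> \<bar>l t - L t i\<bar> \<le> 1"
  using mixed_loss_range[of t] weights_pos[of "t - 1"] loss_range[of t i] by fastforce

lemma sq_regret_le: "t \<in> {1..T} \<Longrightarrow> i \<in> E \<Longrightarrow> (l t - L t i)^2 \<le> 1"
  using regret_abs_le abs_le_square_iff[of "l t - L t i" 1] by simp

lemma eta_mult_regret_abs_le:
  "Suc t \<le> T \<Longrightarrow> i \<in> E \<Longrightarrow> \<bar>eta t i * (l (Suc t) - L (Suc t) i)\<bar> \<le> 1/2"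
  using two_experts regret_abs_le[of "Suc t" i] by (intro amlp_eta_mult_abs_le_half) auto

text \<open>Since p is proportional to eta * w, the first-order terms of the update cancel.\<close>
lemma weighted_regret_sum_zero:
  assumes t: "t \<in> {1..T}"
  shows "(\<Sum>i\<in>E. eta (t - 1) i * wgt (t - 1) i * (l t - L t i)) = 0"
proof -
  let ?Z = "\<Sum>j\<in>E. eta (t - 1) j * wgt (t - 1) j"
  have "0 < eta (t - 1) i * wgt (t - 1) i" if "i \<in> E" for i
    using that t by (intro mult_pos_pos eta_pos weights_pos) auto
  moreover have "E \<noteq> {}" using two_experts by auto
  ultimately have Z: "?Z > 0" using finite_experts by (intro sum_pos) auto
  have "(\<Sum>i\<in>E. eta (t - 1) i * wgt (t - 1) i * L t i) = ?Z * (\<Sum>i\<in>E. amlp_p E L l t i * L t i)"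
    unfolding amlp_p_def sum_distrib_left using Z by (intro sum.cong) auto
  also have "\<dots> = ?Z * l t" using mixed_loss[OF t] by simp
  finally show ?thesis by (simp add: right_diff_distrib sum_subtractf sum_distrib_right)
qed

lemma wgt_sum_Suc_le:
  assumes t: "Suc t \<le> T"
  shows "wgt_sum (Suc t) \<le> wgt_sum t + (\<Sum>i\<in>E. (eta t i / eta (Suc t) i - 1) / exp 1)"
proof -
  define v where "v i = wgt t i * (1 + eta t i * (l (Suc t) - L (Suc t) i))" for i
  have each: "wgt (Suc t) i \<le> v i + (eta t i / eta (Suc t) i - 1) / exp 1" if i: "i \<in> E" for i
  proof -
    have "0 < 1 + eta t i * (l (Suc t) - L (Suc t) i)"
      using eta_mult_regret_abs_le[OF t i] by linarith
    then have "0 < v i" using weights_pos[of t i] t i by (simp add: v_def)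
    moreover have "0 < eta (Suc t) i / eta t i" "eta (Suc t) i / eta t i \<le> 1"
      using eta_pos[of "Suc t" i] eta_pos[of t i] eta_Suc_le[of t i] by simp_all
    ultimately have "v i powr (eta (Suc t) i / eta t i)
        \<le> v i + (1 / (eta (Suc t) i / eta t i) - 1) / exp 1"
      by (rule powr_le_self_add)
    then show ?thesis by (simp add: v_def)
  qed
  have "wgt_sum (Suc t) \<le> (\<Sum>i\<in>E. v i + (eta t i / eta (Suc t) i - 1) / exp 1)"
    using each by (intro sum_mono) auto
  also have "\<dots> = (\<Sum>i\<in>E. v i) + (\<Sum>i\<in>E. (eta t i / eta (Suc t) i - 1) / exp 1)"
    by (rule sum.distrib)
  also have "(\<Sum>i\<in>E. v i) = wgt_sum t + (\<Sum>i\<in>E. eta t i * wgt t i * (l (Suc t) - L (Suc t) i))"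
    unfolding v_def sum.distrib[symmetric] by (simp add: algebra_simps)
  also have "(\<Sum>i\<in>E. eta t i * wgt t i * (l (Suc t) - L (Suc t) i)) = 0"
    using weighted_regret_sum_zero[of "Suc t"] t by simp
  finally show ?thesis by simp
qed

lemma wgt_sum_le:
  "t \<le> T \<Longrightarrow> wgt_sum t \<le> 1 + (\<Sum>s=1..t. \<Sum>i\<in>E. (eta (s - 1) i / eta s i - 1) / exp 1)"
proof (induction t)
  case 0
  then show ?case using two_experts by simp
next
  case (Suc t)
  then show ?case using wgt_sum_Suc_le[of t] by (simp add: sum.nat_ivl_Suc')
qed

lemma eta_ratio_Suc_le:
  "2 * (eta t i / eta (Suc t) i - 1) \<le> (l (Suc t) - L (Suc t) i)^2 / (1 + sq_sum t i)"
proof -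
  define a where "a = (l (Suc t) - L (Suc t) i)^2"
  define S where "S = sq_sum t i"
  define c where "c = ln (real (card E))"
  define q where "q = a / (1 + S)"
  have S0: "S \<ge> 0" using sq_sum_nonneg by (simp add: S_def)
  have a0: "a \<ge> 0" by (simp add: a_def)
  have c0: "c > 0" using ln_card_ge_half by (simp add: c_def)
  have e1: "eta t i \<le> sqrt (c / (1 + S))" by (simp add: eta_eq S_def c_def)
  have e2: "eta (Suc t) i = min (1/2) (sqrt (c / (1 + (S + a))))"
    by (simp add: eta_eq sq_sum_Suc S_def a_def c_def)
  have ep: "eta (Suc t) i > 0" by (rule eta_pos)
  have "eta t i / eta (Suc t) i \<le> sqrt ((1 + (S + a)) / (1 + S))"
  proof (cases "eta (Suc t) i = 1/2")
    case True
    then have "eta t i / eta (Suc t) i \<le> 1" using amlp_eta_le_half[of "card E" L l t i] by simp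
    also have "1 \<le> sqrt ((1 + (S + a)) / (1 + S))" using S0 a0 by simp
    finally show ?thesis .
  next
    case False
    then have "eta (Suc t) i = sqrt (c / (1 + (S + a)))" using e2 by (auto simp: min_def)
    then have "eta t i / eta (Suc t) i \<le> sqrt (c / (1 + S)) / sqrt (c / (1 + (S + a)))"
      using ep e1 by (simp add: divide_right_mono)
    also have "\<dots> = sqrt ((c / (1 + S)) / (c / (1 + (S + a))))" by (simp add: real_sqrt_divide)
    also have "(c / (1 + S)) / (c / (1 + (S + a))) = (1 + (S + a)) / (1 + S)"
    proof -
      have "(c / x) / (c / y) = y / x" if "x \<noteq> 0" "y \<noteq> 0" for x y
        using that c0 by (simp add: field_simps)
      moreover have "1 + S \<noteq> 0" "1 + (S + a) \<noteq> 0" using S0 a0 by simp_all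
      ultimately show ?thesis by simp
    qed
    finally show ?thesis .
  qed
  also have "(1 + (S + a)) / (1 + S) = 1 + q" using S0 by (simp add: q_def field_simps)
  also have "sqrt (1 + q) \<le> 1 + q / 2" using a0 S0 by (intro sqrt_one_plus_le) (simp add: q_def)
  finally have "2 * (eta t i / eta (Suc t) i - 1) \<le> q" by argo
  then show ?thesis by (simp add: q_def a_def S_def)
qed

lemma eta_ratio_sum_le:
  "t \<le> T \<Longrightarrow> i \<in> E \<Longrightarrow> 2 * (\<Sum>s=1..t. eta (s - 1) i / eta s i - 1)
      \<le> ln (1 + sq_sum t i) + (1 - 1 / (1 + sq_sum t i))"
proof (induction t)
  case 0
  then show ?case by simp
next
  case (Suc t)
  define a where "a = (l (Suc t) - L (Suc t) i)^2"
  define S where "S = sq_sum t i"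
  have a: "0 \<le> a" "a \<le> 1" using sq_regret_le[of "Suc t" i] Suc.prems by (simp_all add: a_def)
  have S0: "S \<ge> 0" using sq_sum_nonneg by (simp add: S_def)
  have "2 * (\<Sum>s=1..t. eta (s - 1) i / eta s i - 1) \<le> ln (1 + S) + (1 - 1 / (1 + S))"
    using Suc unfolding S_def by simp
  moreover have "2 * (eta t i / eta (Suc t) i - 1) \<le> a / (1 + S)"
    using eta_ratio_Suc_le[of t i] unfolding a_def S_def .
  moreover note divide_le_ln_increment[OF a S0]
  ultimately have "2 * (\<Sum>s=1..Suc t. eta (s - 1) i / eta s i - 1)
      \<le> ln (1 + (S + a)) + (1 - 1 / (1 + (S + a)))"
    by (simp add: sum.nat_ivl_Suc')
  then show ?case by (simp add: sq_sum_Suc a_def S_def)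
qed

lemma sq_sum_le: "t \<le> T \<Longrightarrow> i \<in> E \<Longrightarrow> sq_sum t i \<le> real t"
  using sum_mono[of "{1..t}" "\<lambda>s. (l s - L s i)^2" "\<lambda>_. 1"] sq_regret_le by simp

lemma wgt_sum_final: "wgt_sum T \<le> 1 + real (card E) / (2 * exp 1) * (1 + ln (real T + 1))"
proof -
  have "wgt_sum T \<le> 1 + (\<Sum>s=1..T. \<Sum>i\<in>E. (eta (s - 1) i / eta s i - 1) / exp 1)"
    using wgt_sum_le by simp
  also have "(\<Sum>s=1..T. \<Sum>i\<in>E. (eta (s - 1) i / eta s i - 1) / exp 1)
      = (\<Sum>i\<in>E. (\<Sum>s=1..T. eta (s - 1) i / eta s i - 1) / exp 1)"
    by (subst sum.swap) (simp add: sum_divide_distrib)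
  also have "\<dots> \<le> (\<Sum>i\<in>E. ((1 + ln (real T + 1)) / 2) / exp 1)"
  proof (intro sum_mono divide_right_mono)
    fix i assume i: "i \<in> E"
    define R where "R = (\<Sum>s=1..T. eta (s - 1) i / eta s i - 1)"
    have S0: "sq_sum T i \<ge> 0" by (rule sq_sum_nonneg)
    have "2 * R
        \<le> ln (1 + sq_sum T i) + (1 - 1 / (1 + sq_sum T i))"
      using eta_ratio_sum_le i by (simp add: R_def)
    moreover have "ln (1 + sq_sum T i) \<le> ln (real T + 1)" using sq_sum_le[of T i] i S0 by simp
    moreover have "1 - 1 / (1 + sq_sum T i) \<le> 1" using S0 by simp
    ultimately have "R \<le> (1 + ln (real T + 1)) / 2" by argo
    then show "(\<Sum>s=1..T. eta (s - 1) i / eta s i - 1) \<le> (1 + ln (real T + 1)) / 2"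
      by (simp add: R_def)
  qed simp
  finally show ?thesis by simp
qed

lemma ln_wgt_div_eta_ge:
  "t \<le> T \<Longrightarrow> i \<in> E \<Longrightarrow> - ln (card E) / eta 0 i
     + (\<Sum>s=1..t. (l s - L s i) - eta (s - 1) i * (l s - L s i)^2) \<le> ln (wgt t i) / eta t i"
proof (induction t)
  case 0
  then show ?case using two_experts by (simp add: ln_div)
next
  case (Suc t)
  define r where "r = l (Suc t) - L (Suc t) i"
  define e where "e = eta t i"
  define e' where "e' = eta (Suc t) i"
  have ep: "e > 0" "e' > 0" using eta_pos by (simp_all add: e_def e'_def)
  have er: "-(1/2) \<le> e * r" "e * r \<le> 1/2"
    using eta_mult_regret_abs_le[of t i] Suc.prems by (simp_all add: e_def r_def abs_le_iff)
  have wp: "wgt t i > 0" using weights_pos[of t i] Suc.prems by simp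
  have b: "0 < 1 + e * r" using er by linarith
  define W1 where "W1 = wgt (Suc t) i"
  define W0 where "W0 = wgt t i"
  have "W1 = (W0 * (1 + e * r)) powr (e' / e)" by (simp add: W1_def W0_def r_def e_def e'_def)
  then have "ln W1 = e' / e * (ln W0 + ln (1 + e * r))"
    using wp b by (simp add: W0_def ln_mult)
  then have "ln W1 / e' = ln W0 / e + ln (1 + e * r) / e"
    using ep by (simp add: field_simps)
  then have "ln (wgt (Suc t) i) / e' = ln (wgt t i) / e + ln (1 + e * r) / e"
    by (simp only: W1_def W0_def)
  moreover have "(e * r - (e * r)^2) / e \<le> ln (1 + e * r) / e"
    using ln_one_plus_lower_bound[OF er] ep by (intro divide_right_mono) auto
  moreover have "(e * r - (e * r)^2) / e = r - e * r^2"
    using ep by (simp add: field_simps power2_eq_square)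
  ultimately show ?case using Suc by (simp add: sum.nat_ivl_Suc' r_def e_def e'_def)
qed

lemma eta_sq_sum_le:
  "t \<le> T \<Longrightarrow> i \<in> E \<Longrightarrow> (\<Sum>s=1..t. eta (s - 1) i * (l s - L s i)^2)
     \<le> sqrt (ln (card E)) * (3 * sqrt (1 + sq_sum t i) - 3)"
proof (induction t)
  case 0
  then show ?case by simp
next
  case (Suc t)
  define a where "a = (l (Suc t) - L (Suc t) i)^2"
  define S where "S = sq_sum t i"
  define c where "c = ln (real (card E))"
  have a: "0 \<le> a" "a \<le> 1" using sq_regret_le[of "Suc t" i] Suc.prems by (simp_all add: a_def)
  have S0: "S \<ge> 0" using sq_sum_nonneg by (simp add: S_def)
  have "eta t i * a \<le> sqrt (c / (1 + S)) * a"
    using a by (intro mult_right_mono) (simp_all add: eta_eq S_def c_def)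
  also have "\<dots> = sqrt c * (a / sqrt (1 + S))" by (simp add: real_sqrt_divide)
  also have "\<dots> \<le> sqrt c * (3 * (sqrt (1 + (S + a)) - sqrt (1 + S)))"
    using divide_sqrt_le_sqrt_increment[OF a S0] ln_card_ge_half
    by (intro mult_left_mono) (simp_all add: c_def)
  finally have "eta t i * a \<le> sqrt c * (3 * (sqrt (1 + (S + a)) - sqrt (1 + S)))" .
  with Suc show ?case
    by (simp add: sum.nat_ivl_Suc' sq_sum_Suc a_def S_def c_def algebra_simps)
qed

lemma eta_zero_ge_half: "1/2 \<le> eta 0 i"
proof -
  have "sqrt (1/4) \<le> sqrt (ln (card E))" using ln_card_ge_half by (intro real_sqrt_le_mono) simp
  then show ?thesis by (simp add: eta_eq real_sqrt_divide)
qed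

lemma inverse_eta_le: "1 / eta t i \<le> 2 + sqrt (1 + sq_sum t i) / sqrt (ln (card E))"
proof (cases "eta t i = 1/2")
  case True
  have "0 \<le> sqrt (1 + sq_sum t i) / sqrt (ln (card E))" using sq_sum_nonneg ln_card_ge_half by simp
  moreover have "1 / eta t i = 2" by (subst True) simp
  ultimately show ?thesis by simp
next
  case False
  then have "eta t i = sqrt (ln (card E) / (1 + sq_sum t i))" by (auto simp: eta_eq min_def)
  then show ?thesis by (simp add: real_sqrt_divide)
qed

lemma ln_wgt_final_le:
  assumes k: "k \<in> E"
  shows "ln (wgt T k) \<le> ln (1 + real (card E) / (2 * exp 1) * (1 + ln (real T + 1)))"
proof -
  have "0 < wgt T k" using weights_pos[of T k] k by simp
  moreover have "wgt T k \<le> wgt_sum T"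
    using finite_experts k weights_pos[of T] by (intro member_le_sum) (auto intro: less_imp_le)
  ultimately have "ln (wgt T k) \<le> ln (wgt_sum T)" by simp
  also have "\<dots> \<le> ln (1 + real (card E) / (2 * exp 1) * (1 + ln (real T + 1)))"
  proof -
    have "0 < wgt_sum T" using finite_experts k weights_pos[of T] by (intro sum_pos) auto
    then show ?thesis using wgt_sum_final by simp
  qed
  finally show ?thesis .
qed

theorem regret_bound:
  assumes k: "k \<in> E"
  shows "(\<Sum>t=1..T. l t - L t k)
     \<le> usc_Gamma (card E) T / sqrt (ln (card E)) * sqrt (1 + sq_sum T k) + 2 * usc_Gamma (card E) T"
proof -
  define c where "c = ln (real (card E))"
  define B where "B = ln (1 + real (card E) / (2 * exp 1) * (1 + ln (real T + 1)))"
  define X where "X = sqrt (1 + sq_sum T k)"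
  have c: "c \<ge> 1/2" using ln_card_ge_half by (simp add: c_def)
  have B0: "B \<ge> 0" unfolding B_def by (intro ln_ge_zero) simp
  have "c / eta 0 k \<le> c / (1/2)"
    using c eta_pos eta_zero_ge_half by (intro divide_left_mono) auto
  then have c0: "c / eta 0 k \<le> 2 * c" by simp
  have "ln (wgt T k) / eta T k \<le> B / eta T k"
    using ln_wgt_final_le[OF k] less_imp_le[OF eta_pos] by (intro divide_right_mono) (simp_all add: B_def)
  also have "\<dots> = B * (1 / eta T k)" by simp
  also have "\<dots> \<le> B * (2 + X / sqrt c)"
    using inverse_eta_le B0 by (intro mult_left_mono) (simp_all add: X_def c_def)
  finally have "ln (wgt T k) / eta T k \<le> B * (2 + X / sqrt c)" .
  moreover have "(\<Sum>s=1..T. eta (s - 1) k * (l s - L s k)^2) \<le> sqrt c * (3 * X - 3)"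
    using eta_sq_sum_le[of T k] k by (simp add: X_def c_def)
  moreover note ln_wgt_div_eta_ge[of T k]
  ultimately have "(\<Sum>t=1..T. l t - L t k) \<le> B * (2 + X / sqrt c) + 2 * c + sqrt c * (3 * X - 3)"
    using c0 k by (simp add: sum_subtractf c_def)
  also have "\<dots> \<le> (3 * c + B) / sqrt c * X + 2 * (3 * c + B)"
  proof -
    have "(3 * c + B) / sqrt c * X = 3 * (c / sqrt c * X) + B * X / sqrt c"
      by (simp add: add_divide_distrib algebra_simps)
    also have "c / sqrt c = sqrt c" using c by (simp add: real_div_sqrt)
    finally have "(3 * c + B) / sqrt c * X = 3 * (sqrt c * X) + B * X / sqrt c" .
    moreover have "B * (2 + X / sqrt c) = 2 * B + B * X / sqrt c"
      and "sqrt c * (3 * X - 3) = 3 * (sqrt c * X) - 3 * sqrt c" by (simp_all add: algebra_simps)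
    moreover have "0 < sqrt c" using c by simp
    ultimately show ?thesis using c by argo
  qed
  finally show ?thesis by (simp add: usc_Gamma_def B_def X_def c_def)
qed

end

section \<open>Exp-concave functions\<close>

lemma exp_concave_on_mono:
  assumes ec: "exp_concave_on \<alpha> X f" and a: "0 < a" "a \<le> \<alpha>"
  shows "exp_concave_on a X f"
proof -
  define p where "p = a / \<alpha>"
  have p: "0 < p" "p \<le> 1" using a by (auto simp: p_def)
  have pw: "exp (- a * f z) = exp (- \<alpha> * f z) powr p" for z
    using a by (simp add: powr_def p_def field_simps)
  have c: "concave_on X (\<lambda>x. exp (- \<alpha> * f x))" using ec by (simp add: exp_concave_on_def)
  show ?thesis unfolding exp_concave_on_def concave_on_iff
  proof (intro conjI ballI allI impI)
    show "convex X" using c by (rule concave_on_imp_convex)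
    fix x y and u v :: real assume xy: "x \<in> X" "y \<in> X" and uv: "0 \<le> u" "0 \<le> v" "u + v = 1"
    define ex where "ex = exp (- \<alpha> * f x)"
    define ey where "ey = exp (- \<alpha> * f y)"
    define m where "m = u * ex + v * ey"
    have pos: "ex > 0" "ey > 0" by (simp_all add: ex_def ey_def)
    have m: "m > 0" using uv pos by (cases "u = 0") (auto simp: m_def add_pos_nonneg)
    have m_le: "m \<le> exp (- \<alpha> * f (u *\<^sub>R x + v *\<^sub>R y))"
      using c xy uv unfolding concave_on_iff m_def ex_def ey_def by blast
    text \<open>Young's inequality linearises q powr p around m.\<close>
    have young: "q powr p \<le> m powr p * (p * q / m + (1 - p))" if q: "q > 0" for q
    proof -
      have "(q / m) powr p * 1 powr (1 - p) \<le> p * (q / m) + (1 - p) * 1"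
        using p q m by (intro Youngs_inequality_0) auto
      then have "m powr p * (q / m) powr p \<le> m powr p * (p * q / m + (1 - p))"
        by (intro mult_left_mono) auto
      moreover have "m powr p * (q / m) powr p = q powr p"
        using q m by (simp add: powr_divide)
      ultimately show ?thesis by simp
    qed
    have "u * ex powr p + v * ey powr p
        \<le> u * (m powr p * (p * ex / m + (1 - p))) + v * (m powr p * (p * ey / m + (1 - p)))"
      using young[OF pos(1)] young[OF pos(2)] uv by (intro add_mono mult_left_mono) auto
    also have "\<dots> = m powr p * (p * (u * ex + v * ey) / m + (u + v) * (1 - p))"
      by (simp add: algebra_simps add_divide_distrib)
    also have "\<dots> = m powr p" using m uv by (simp add: m_def)
    also have "\<dots> \<le> exp (- \<alpha> * f (u *\<^sub>R x + v *\<^sub>R y)) powr p"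
      using m m_le p by (intro powr_mono2) auto
    finally show "u * exp (- a * f x) + v * exp (- a * f y) \<le> exp (- a * f (u *\<^sub>R x + v *\<^sub>R y))"
      by (simp only: pw ex_def ey_def)
  qed
qed

lemma concave_on_unit_interval_le_derivative:
  fixes \<phi> :: "real \<Rightarrow> real"
  assumes c: "concave_on {0..1} \<phi>" and d: "(\<phi> has_field_derivative d) (at 0 within {0..1})"
  shows "\<phi> 1 - \<phi> 0 \<le> d"
proof -
  have "at (0::real) within {0..1} = at_right 0" by (rule at_within_Icc_at_right) simp
  then have lim: "((\<lambda>s. (\<phi> s - \<phi> 0) / (s - 0)) \<longlongrightarrow> d) (at_right 0)"
    using d unfolding has_field_derivative_iff by simp
  have "eventually (\<lambda>s. \<phi> 1 - \<phi> 0 \<le> (\<phi> s - \<phi> 0) / (s - 0)) (at_right (0::real))"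
    unfolding eventually_at_right[OF zero_less_one]
  proof (intro exI[of _ 1] conjI allI impI)
    fix s :: real assume s: "0 < s" "s < 1"
    have "(1 - s) * \<phi> 0 + s * \<phi> 1 \<le> \<phi> ((1 - s) *\<^sub>R 0 + s *\<^sub>R 1)"
      using s by (intro concave_onD_Icc[OF c]) auto
    then have "s * (\<phi> 1 - \<phi> 0) \<le> \<phi> s - \<phi> 0" by (simp add: algebra_simps)
    then show "\<phi> 1 - \<phi> 0 \<le> (\<phi> s - \<phi> 0) / (s - 0)" using s by (simp add: field_simps)
  qed simp
  then show ?thesis by (rule tendsto_lowerbound[OF lim]) simp
qed

lemma exp_concave_tangent_bound:
  fixes f :: "'a::euclidean_space \<Rightarrow> real" and gf :: "'a \<Rightarrow> 'a"
  assumes X: "convex X" and ec: "exp_concave_on k X f"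
    and der: "\<And>z. z \<in> X \<Longrightarrow> (f has_derivative (\<lambda>h. inner (gf z) h)) (at z within X)"
    and x: "x \<in> X" and y: "y \<in> X"
  shows "exp (- k * f y) \<le> exp (- k * f x) * (1 - k * inner (gf x) (y - x))"
proof -
  define p where "p s = x + s *\<^sub>R (y - x)" for s :: real
  define \<phi> where "\<phi> s = exp (- k * f (p s))" for s
  define w where "w = inner (gf x) (y - x)"
  have pX: "p s \<in> X" if "s \<in> {0..1}" for s
    using convexD[OF X x y, of "1 - s" s] that by (simp add: p_def algebra_simps)
  have p_affine: "p (u *\<^sub>R s1 + v *\<^sub>R s2) = u *\<^sub>R p s1 + v *\<^sub>R p s2" if "u + v = 1" for u v s1 s2
  proof -
    have "x = u *\<^sub>R x + v *\<^sub>R x" using that by (simp add: scaleR_add_left[symmetric])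
    then show ?thesis by (simp add: p_def algebra_simps)
  qed
  have conc: "concave_on {0..1} \<phi>"
    unfolding concave_on_iff
  proof (intro conjI ballI allI impI)
    fix s1 s2 u v :: real assume s: "s1 \<in> {0..1}" "s2 \<in> {0..1}" and uv: "0 \<le> u" "0 \<le> v" "u + v = 1"
    show "u * \<phi> s1 + v * \<phi> s2 \<le> \<phi> (u *\<^sub>R s1 + v *\<^sub>R s2)"
      using ec pX[OF s(1)] pX[OF s(2)] uv p_affine[OF uv(3)]
      unfolding exp_concave_on_def concave_on_iff \<phi>_def by simp
  qed simp
  have "((\<lambda>s. f (p s)) has_derivative (\<lambda>d. inner (gf (p 0)) (d *\<^sub>R (y - x)))) (at 0 within {0..1})"
    by (rule has_derivative_in_compose2[of X f "\<lambda>z h. inner (gf z) h", OF der])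
       (use pX in \<open>auto simp: p_def intro!: derivative_eq_intros\<close>)
  moreover have "(\<lambda>d. inner (gf (p 0)) (d *\<^sub>R (y - x))) = (*) w"
    by (auto simp: p_def w_def)
  ultimately have "((\<lambda>s. f (p s)) has_field_derivative w) (at 0 within {0..1})"
    by (simp add: has_field_derivative_def)
  then have "((\<lambda>s. - k * f (p s)) has_field_derivative (- k * w)) (at 0 within {0..1})"
    by (rule DERIV_cmult)
  from DERIV_chain2[OF DERIV_exp this]
  have "(\<phi> has_field_derivative exp (- k * f x) * (- k * w)) (at 0 within {0..1})"
    unfolding \<phi>_def by (simp add: p_def)
  from concave_on_unit_interval_le_derivative[OF conc this]
  show ?thesis by (simp add: \<phi>_def p_def w_def algebra_simps)
qed

text \<open>Hazan, Agarwal and Kale: apply the tangent bound with the smaller exp-concavity parameter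
  k = 2 * usc_beta G D \<alpha>, for which k * |<g x, y - x>| \<le> 1/4.\<close>
lemma exp_concave_quadratic_bound:
  fixes f :: "'a::euclidean_space \<Rightarrow> real" and gf :: "'a \<Rightarrow> 'a"
  assumes X: "convex X" and ec: "exp_concave_on \<alpha> X f"
    and der: "\<And>z. z \<in> X \<Longrightarrow> (f has_derivative (\<lambda>h. inner (gf z) h)) (at z within X)"
    and x: "x \<in> X" and y: "y \<in> X" and gb: "norm (gf x) \<le> G" and dxy: "norm (x - y) \<le> D"
    and G: "G > 0" and D: "D > 0" and \<alpha>: "\<alpha> > 0"
  shows "f x - f y \<le> inner (gf x) (x - y) - usc_beta G D \<alpha> / 2 * (inner (gf x) (x - y))^2"
proof -
  define k where "k = min (1 / (4 * G * D)) \<alpha>"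
  define w where "w = inner (gf x) (y - x)"
  have k0: "k > 0" using G D \<alpha> by (simp add: k_def)
  have "\<bar>k * w\<bar> = k * \<bar>w\<bar>" using k0 by (simp add: abs_mult)
  also have "\<dots> \<le> k * (G * D)"
  proof (rule mult_left_mono)
    have "\<bar>w\<bar> \<le> norm (gf x) * norm (y - x)" unfolding w_def by (rule Cauchy_Schwarz_ineq2)
    also have "\<dots> \<le> G * D" using gb dxy G by (intro mult_mono) (auto simp: norm_minus_commute)
    finally show "\<bar>w\<bar> \<le> G * D" .
  qed (use k0 in simp)
  also have "\<dots> \<le> 1/4"
    using mult_right_mono[of k "1 / (4 * G * D)" "G * D"] G D by (simp add: k_def)
  finally have kw: "\<bar>k * w\<bar> \<le> 1/4" .
  have "exp (- k * f y) \<le> exp (- k * f x) * (1 - k * w)"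
    unfolding w_def
    by (rule exp_concave_tangent_bound[OF X exp_concave_on_mono[OF ec k0] der x y])
       (simp add: k_def)
  moreover have "0 < 1 - k * w" using kw by linarith
  ultimately have "- k * f y \<le> ln (exp (- k * f x) * (1 - k * w))"
    by (subst ln_ge_iff) auto
  also have "\<dots> = - k * f x + ln (1 - k * w)" using \<open>0 < 1 - k * w\<close> by (simp add: ln_mult)
  also have "ln (1 - k * w) \<le> - (k * w) - (k * w)^2 / 4" by (rule ln_one_minus_upper_bound[OF kw])
  finally have "k * (f x - f y) \<le> k * (- w - k / 4 * w^2)"
    by (simp add: power_mult_distrib power2_eq_square algebra_simps)
  then have "f x - f y \<le> - w - k / 4 * w^2" using k0 by simp
  moreover have "inner (gf x) (x - y) = - w" by (simp add: w_def inner_diff_right)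
  ultimately show ?thesis by (simp add: usc_beta_def k_def)
qed

lemma usc_state_Suc:
  "usc_state E f g G D xbar (Suc t) =
   (let L = fst (usc_state E f g G D xbar t); l = snd (usc_state E f g G D xbar t);
        Lr = (\<lambda>i. (inner (g (Suc t) (usc_point E f L l (Suc t))) (expert_out i (hist f (Suc t)) - xbar)
                   + G * D) / (2 * G * D))
    in (L(Suc t := Lr), l(Suc t := (\<Sum>i\<in>E. amlp_p E L l (Suc t) i * Lr i))))"
  by (simp add: Let_def case_prod_beta)

lemma usc_state_stable:
  assumes "t \<le> t'" "s \<le> t"
  shows "fst (usc_state E f g G D xbar t') s = fst (usc_state E f g G D xbar t) s
       \<and> snd (usc_state E f g G D xbar t') s = snd (usc_state E f g G D xbar t) s"
  using assms(1)
proof (induction t' rule: dec_induct)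
  case (step n)
  then have "s \<noteq> Suc n" using assms(2) by simp
  then show ?case using step.IH by (simp del: usc_state.simps add: usc_state_Suc Let_def)
qed simp

lemma amlp_eta_cong:
  "(\<And>s. s \<le> t \<Longrightarrow> L s = L' s \<and> l s = l' s) \<Longrightarrow> amlp_eta n L l t i = amlp_eta n L' l' t i"
  unfolding amlp_eta_def by (intro arg_cong2[where f=min] refl arg_cong[where f=sqrt]
      arg_cong2[where f="(/)"] arg_cong2[where f="(+)"] sum.cong) auto

lemma amlp_w_cong:
  "(\<And>s. s \<le> t \<Longrightarrow> L s = L' s \<and> l s = l' s) \<Longrightarrow> amlp_w n L l t i = amlp_w n L' l' t i"
proof (induction t)
  case (Suc t)
  then have "amlp_eta n L l t i = amlp_eta n L' l' t i"
    and "amlp_eta n L l (Suc t) i = amlp_eta n L' l' (Suc t) i"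
    and "L (Suc t) = L' (Suc t) \<and> l (Suc t) = l' (Suc t)"
    by (auto intro!: amlp_eta_cong)
  with Suc show ?case by simp
qed simp

lemma amlp_p_cong:
  "(\<And>s. s \<le> t - 1 \<Longrightarrow> L s = L' s \<and> l s = l' s) \<Longrightarrow> amlp_p E L l t i = amlp_p E L' l' t i"
  unfolding amlp_p_def
  by (intro arg_cong2[where f="(/)"] arg_cong2[where f="(*)"] sum.cong refl amlp_eta_cong amlp_w_cong) auto

lemma usc_point_cong:
  "(\<And>s. s \<le> t - 1 \<Longrightarrow> L s = L' s \<and> l s = l' s) \<Longrightarrow> usc_point E f L l t = usc_point E f L' l' t"
  unfolding usc_point_def by (intro sum.cong refl arg_cong2[where f="(*\<^sub>R)"] amlp_p_cong) auto

text \<open>x_t only reads rounds before t, so every round can be read off the final state.\<close>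
lemma usc_final_state:
  fixes E f g G D xbar T
  defines "L \<equiv> fst (usc_state E f g G D xbar T)" and "l \<equiv> snd (usc_state E f g G D xbar T)"
  assumes t: "t \<in> {1..T}"
  shows "usc_x E f g G D xbar t = usc_point E f L l t
     \<and> L t = (\<lambda>i. (inner (g t (usc_point E f L l t)) (expert_out i (hist f t) - xbar) + G * D) / (2 * G * D))
     \<and> l t = (\<Sum>i\<in>E. amlp_p E L l t i * L t i)"
proof -
  obtain m where m: "t = Suc m" using t by (cases t) auto
  define Lm where "Lm = fst (usc_state E f g G D xbar m)"
  define lm where "lm = snd (usc_state E f g G D xbar m)"
  have final: "L s = fst (usc_state E f g G D xbar t) s \<and> l s = snd (usc_state E f g G D xbar t) s"
    if "s \<le> t" for s
    using usc_state_stable[of t T s E f g G D xbar] t that by (simp add: L_def l_def)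
  have "Lm s = L s \<and> lm s = l s" if "s \<le> t - 1" for s
    using final[of s] usc_state_stable[of m t s E f g G D xbar] that m by (simp del: usc_state.simps add: Lm_def lm_def)
  then have x: "usc_point E f Lm lm t = usc_point E f L l t"
    and p: "\<And>i. amlp_p E Lm lm t i = amlp_p E L l t i"
    by (blast intro: usc_point_cong amlp_p_cong)+
  have "usc_x E f g G D xbar t = usc_point E f Lm lm t"
    by (simp add: usc_x_def case_prod_beta Lm_def lm_def m)
  moreover have "usc_state E f g G D xbar t = (Lm(t := (\<lambda>i. (inner (g t (usc_point E f Lm lm t))
        (expert_out i (hist f t) - xbar) + G * D) / (2 * G * D))),
      lm(t := (\<Sum>i\<in>E. amlp_p E Lm lm t i * ((inner (g t (usc_point E f Lm lm t))
        (expert_out i (hist f t) - xbar) + G * D) / (2 * G * D)))))"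
    unfolding m by (subst usc_state_Suc) (simp add: Let_def Lm_def lm_def)
  ultimately show ?thesis using final[of t] x p by simp
qed

section \<open>Regret of USC against a single expert\<close>

lemma regret_tradeoff:
  fixes K \<gamma> c \<Gamma> R S :: real
  assumes K: "K > 0" and \<gamma>: "\<gamma> > 0" "\<gamma> * K \<le> 1/8" and c: "c > 0" and S: "S \<ge> 0"
    and \<Gamma>: "1/8 \<le> \<Gamma> / sqrt c"
    and R: "R \<le> \<Gamma> / sqrt c * sqrt (1 + S) + 2 * \<Gamma>"
  shows "2 * K * R - 2 * \<gamma> * K^2 * S \<le> 2 * \<Gamma> * K * (2 + 1 / sqrt c) + \<Gamma>^2 / (2 * \<gamma> * c)"
proof -
  define a where "a = \<Gamma> / sqrt c"
  define Y where "Y = sqrt (1 + S)"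
  have Y2: "Y^2 = 1 + S" using S by (simp add: Y_def)
  have "0 \<le> (2 * \<gamma> * K * Y - a)^2" by simp
  then have "2 * K * a * Y * (2 * \<gamma>) \<le> (2 * \<gamma> * K^2 * Y^2 + a^2 / (2 * \<gamma>)) * (2 * \<gamma>)"
    using \<gamma> by (simp add: power2_eq_square algebra_simps)
  then have am_gm: "2 * K * a * Y \<le> 2 * \<gamma> * K^2 * Y^2 + a^2 / (2 * \<gamma>)"
    using \<gamma> by (simp only: mult_le_cancel_right_pos)
  have "2 * K * R \<le> 2 * K * a * Y + 4 * \<Gamma> * K"
    using mult_left_mono[OF R, of "2 * K"] K by (simp add: a_def Y_def algebra_simps)
  moreover have "a^2 / (2 * \<gamma>) = \<Gamma>^2 / (2 * \<gamma> * c)" using c by (simp add: a_def power_divide)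
  moreover have "2 * \<gamma> * K^2 \<le> 2 * \<Gamma> * K * (1 / sqrt c)"
  proof -
    have "2 * \<gamma> * K^2 = 2 * (\<gamma> * K) * K" by (simp add: power2_eq_square)
    also have "\<dots> \<le> 2 * (1/8) * K" using \<gamma>(2) K by (intro mult_right_mono mult_left_mono) auto
    also have "\<dots> \<le> 2 * (\<Gamma> / sqrt c) * K" using \<Gamma> K by (intro mult_right_mono mult_left_mono) auto
    finally show ?thesis by simp
  qed
  moreover have "2 * \<Gamma> * K * (2 + 1 / sqrt c) = 4 * \<Gamma> * K + 2 * \<Gamma> * K * (1 / sqrt c)"
    by (simp add: algebra_simps)
  moreover have "2 * \<gamma> * K^2 * S = 2 * \<gamma> * K^2 * Y^2 - 2 * \<gamma> * K^2" by (simp add: Y2 algebra_simps)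
  ultimately show ?thesis using am_gm by argo
qed

locale usc_run =
  fixes X :: "'a::euclidean_space set" and D G :: real and T :: nat
    and f :: "nat \<Rightarrow> 'a \<Rightarrow> real" and g :: "nat \<Rightarrow> 'a \<Rightarrow> 'a"
    and E :: "'a expert set" and xbar :: 'a
  assumes domain: "oco_domain X D" and D_pos: "0 < D" and G_pos: "0 < G"
    and losses: "oco_fns X G T f g"
    and experts_finite: "finite E" and experts_card: "2 \<le> card E"
    and experts_in: "\<And>i h. i \<in> E \<Longrightarrow> expert_out i h \<in> X"
    and xbar_in: "xbar \<in> X"
begin

text \<open>surr_loss t i and surr_mix t are the paper's l_t^i and l_t.\<close>
definition "surr_loss = fst (usc_state E f g G D xbar T)"
definition "surr_mix = snd (usc_state E f g G D xbar T)"
abbreviation "pred t \<equiv> usc_x E f g G D xbar t"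
abbreviation "expert_pred i t \<equiv> expert_out i (hist f t)"

lemma GD_pos: "0 < G * D"
  using G_pos D_pos by simp

lemma domain_convex: "convex X"
  using domain by (simp add: oco_domain_def)

lemma domain_diameter: "x \<in> X \<Longrightarrow> y \<in> X \<Longrightarrow> norm (x - y) \<le> D"
  using domain by (simp add: oco_domain_def)

lemma gradient:
  "t \<in> {1..T} \<Longrightarrow> x \<in> X \<Longrightarrow> (f t has_derivative (\<lambda>h. inner (g t x) h)) (at x within X) \<and> norm (g t x) \<le> G"
  using losses by (simp add: oco_fns_def)

lemma round_equations:
  assumes "t \<in> {1..T}"
  shows "pred t = usc_point E f surr_loss surr_mix t"
    and "surr_loss t i = (inner (g t (pred t)) (expert_pred i t - xbar) + G * D) / (2 * G * D)"
    and "surr_mix t = (\<Sum>i\<in>E. amlp_p E surr_loss surr_mix t i * surr_loss t i)"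
  using usc_final_state[OF assms, of E f g G D xbar] by (simp_all add: surr_loss_def surr_mix_def)

lemma mixture_in_domain:
  assumes "\<forall>i\<in>E. 0 \<le> amlp_p E surr_loss surr_mix t i" "(\<Sum>i\<in>E. amlp_p E surr_loss surr_mix t i) = 1"
  shows "usc_point E f surr_loss surr_mix t \<in> X"
  unfolding usc_point_def using assms experts_in by (intro convex_sum[OF experts_finite domain_convex]) auto

lemma surr_loss_range_at:
  assumes t: "t \<in> {1..T}" and i: "i \<in> E" and x: "pred t \<in> X"
  shows "0 \<le> surr_loss t i \<and> surr_loss t i \<le> 1"
proof -
  have "\<bar>inner (g t (pred t)) (expert_pred i t - xbar)\<bar> \<le> norm (g t (pred t)) * norm (expert_pred i t - xbar)"
    by (rule Cauchy_Schwarz_ineq2)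
  also have "\<dots> \<le> G * D"
    using gradient[OF t x] domain_diameter[OF experts_in[OF i] xbar_in] G_pos by (intro mult_mono) auto
  finally show ?thesis using GD_pos by (simp add: round_equations(2)[OF t] abs_le_iff field_simps)
qed

lemma surr_loss_range: "t \<in> {1..T} \<Longrightarrow> i \<in> E \<Longrightarrow> 0 \<le> surr_loss t i \<and> surr_loss t i \<le> 1"
proof -
  have "\<forall>s\<in>{1..t}. \<forall>i\<in>E. 0 \<le> surr_loss s i \<and> surr_loss s i \<le> 1" if "t \<le> T" for t
    using that
  proof (induction t)
    case (Suc t)
    then have IH: "\<forall>s\<in>{1..t}. \<forall>i\<in>E. 0 \<le> surr_loss s i \<and> surr_loss s i \<le> 1" by simp
    interpret prefix: adapt_ml_prod E surr_loss surr_mix t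
      using IH Suc.prems experts_finite experts_card round_equations(3) by unfold_locales auto
    have "\<forall>i\<in>E. 0 < amlp_w (card E) surr_loss surr_mix t i" using prefix.weights_pos by simp
    then have "pred (Suc t) \<in> X"
      using amlp_p_distribution[OF experts_finite experts_card] Suc.prems
      by (simp add: round_equations(1) mixture_in_domain)
    then have "\<forall>i\<in>E. 0 \<le> surr_loss (Suc t) i \<and> surr_loss (Suc t) i \<le> 1"
      using Suc.prems surr_loss_range_at[of "Suc t"] by simp
    then show ?case using IH by (auto simp: le_Suc_eq)
  qed simp
  then show "t \<in> {1..T} \<Longrightarrow> i \<in> E \<Longrightarrow> 0 \<le> surr_loss t i \<and> surr_loss t i \<le> 1" by auto
qed

sublocale adapt_ml_prod E surr_loss surr_mix T
  using experts_finite experts_card surr_loss_range round_equations(3) by unfold_locales auto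

lemma pred_in_domain: "t \<in> {1..T} \<Longrightarrow> pred t \<in> X"
  using weights_distribution by (simp add: round_equations(1) mixture_in_domain)

text \<open>The surrogate losses are affine in the expert's prediction, so the mixture loss is the
  surrogate loss of the learner's own prediction.\<close>
lemma surr_regret_eq:
  assumes t: "t \<in> {1..T}"
  shows "2 * (G * D) * (surr_mix t - surr_loss t i) = inner (g t (pred t)) (pred t - expert_pred i t)"
proof -
  define p where "p j = amlp_p E surr_loss surr_mix t j" for j
  define q where "q = g t (pred t)"
  have psum: "(\<Sum>j\<in>E. p j) = 1" using weights_distribution[OF t] by (simp add: p_def)
  have "inner q (pred t - xbar) = inner q ((\<Sum>j\<in>E. p j *\<^sub>R expert_pred j t) - (\<Sum>j\<in>E. p j) *\<^sub>R xbar)"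
    using psum by (simp add: round_equations(1)[OF t] usc_point_def p_def)
  also have "\<dots> = (\<Sum>j\<in>E. p j * inner q (expert_pred j t - xbar))"
    by (simp add: scaleR_sum_left sum_subtractf inner_sum_right inner_diff_right right_diff_distrib)
  finally have "surr_mix t = (inner q (pred t - xbar) + (\<Sum>j\<in>E. p j) * (G * D)) / (2 * G * D)"
    unfolding round_equations(3)[OF t] round_equations(2)[OF t]
    by (simp add: p_def q_def sum_divide_distrib[symmetric] sum_distrib_right distrib_left sum.distrib)
  then have "2 * (G * D) * (surr_mix t - surr_loss t i)
      = inner q (pred t - xbar) - inner q (expert_pred i t - xbar)"
    using G_pos D_pos psum by (simp add: round_equations(2)[OF t] q_def field_simps)
  then show ?thesis by (simp add: q_def inner_diff_right)
qed

lemma round_regret_le: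
  assumes t: "t \<in> {1..T}" and k: "k \<in> E" and \<alpha>: "0 < \<alpha>" and ec: "exp_concave_on \<alpha> X (f t)"
  defines "r \<equiv> surr_mix t - surr_loss t k"
  shows "f t (pred t) - f t (expert_pred k t)
    \<le> 2 * (G * D) * r - 2 * usc_beta G D \<alpha> * (G * D)^2 * r^2"
proof -
  have eq: "inner (g t (pred t)) (pred t - expert_pred k t) = 2 * (G * D) * r"
    unfolding r_def by (rule surr_regret_eq[OF t, symmetric])
  have "f t (pred t) - f t (expert_pred k t)
      \<le> 2 * (G * D) * r - usc_beta G D \<alpha> / 2 * (2 * (G * D) * r)^2"
    unfolding eq[symmetric]
    using gradient[OF t] pred_in_domain[OF t] experts_in[OF k] G_pos D_pos \<alpha>
    by (intro exp_concave_quadratic_bound[OF domain_convex ec]) (auto intro: domain_diameter)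
  also have "usc_beta G D \<alpha> / 2 * (2 * (G * D) * r)^2 = 2 * usc_beta G D \<alpha> * (G * D)^2 * r^2"
    by (simp add: power_mult_distrib)
  finally show ?thesis .
qed

theorem regret_vs_expert:
  assumes k: "k \<in> E" and \<alpha>: "0 < \<alpha>" and ec: "\<forall>t\<in>{1..T}. exp_concave_on \<alpha> X (f t)"
  shows "(\<Sum>t=1..T. f t (pred t)) - (\<Sum>t=1..T. f t (expert_pred k t)) \<le> usc_add (card E) T G D \<alpha>"
proof -
  define \<Gamma> where "\<Gamma> = usc_Gamma (card E) T"
  define c where "c = ln (real (card E))"
  define \<gamma> where "\<gamma> = usc_beta G D \<alpha>"
  define r where "r t = surr_mix t - surr_loss t k" for t
  have c: "1/2 \<le> c" using ln_card_ge_half by (simp add: c_def)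
  have \<Gamma>: "1/8 \<le> \<Gamma> / sqrt c"
  proof -
    have "0 \<le> ln (1 + real (card E) / (2 * exp 1) * (1 + ln (real T + 1)))"
      by (intro ln_ge_zero) simp
    then have "3 * c / sqrt c \<le> \<Gamma> / sqrt c" using c by (simp add: \<Gamma>_def usc_Gamma_def c_def divide_right_mono)
    moreover have "3 * c / sqrt c = 3 * (c / sqrt c)" by simp
    moreover have "c / sqrt c = sqrt c" using c by (simp add: real_div_sqrt)
    moreover have "sqrt (1/4) \<le> sqrt c" using c by (intro real_sqrt_le_mono) simp
    ultimately have "3 * sqrt c \<le> \<Gamma> / sqrt c" "1/2 \<le> sqrt c" by (simp_all add: real_sqrt_divide)
    then show ?thesis by linarith
  qed
  have "\<gamma> \<le> 1/2 * (1 / (4 * G * D))"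
    unfolding \<gamma>_def usc_beta_def using min.cobounded1[of "1 / (4 * G * D)" \<alpha>] by linarith
  then have "\<gamma> * (G * D) \<le> 1/2 * (1 / (4 * G * D)) * (G * D)" using GD_pos by (intro mult_right_mono) auto
  also have "\<dots> = 1/8" using G_pos D_pos by simp
  finally have \<gamma>: "0 < \<gamma>" "\<gamma> * (G * D) \<le> 1/8"
    using G_pos D_pos \<alpha> by (simp_all add: \<gamma>_def usc_beta_def)
  have "(\<Sum>t=1..T. f t (pred t) - f t (expert_pred k t))
      \<le> (\<Sum>t=1..T. 2 * (G * D) * r t - 2 * \<gamma> * (G * D)^2 * (r t)^2)"
    using round_regret_le[OF _ k \<alpha>] ec by (intro sum_mono) (simp add: r_def \<gamma>_def)
  also have "\<dots> = 2 * (G * D) * (\<Sum>t=1..T. r t) - 2 * \<gamma> * (G * D)^2 * sq_sum T k"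
    using sum_subtractf[of "\<lambda>t. 2 * (G * D) * r t" "\<lambda>t. 2 * \<gamma> * (G * D)^2 * (r t)^2" "{1..T}"]
    by (simp add: sum_distrib_left r_def)
  also have "\<dots> \<le> 2 * \<Gamma> * (G * D) * (2 + 1 / sqrt c) + \<Gamma>^2 / (2 * \<gamma> * c)"
    using c regret_bound[OF k]
    by (intro regret_tradeoff[OF GD_pos \<gamma> _ sq_sum_nonneg \<Gamma>]) (simp_all add: r_def \<Gamma>_def c_def)
  also have "\<dots> = usc_add (card E) T G D \<alpha>"
    by (simp add: usc_add_def \<Gamma>_def c_def \<gamma>_def mult.assoc)
  finally show ?thesis by (simp add: sum_subtractf)
qed

end

section \<open>The expert set and the size of the additive term\<close>

lemma usc_grid_pos: "0 < T \<Longrightarrow> a \<in> usc_grid T \<Longrightarrow> 0 < a"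
  by (auto simp: usc_grid_def)

lemma finite_usc_experts:
  assumes "finite As" "finite Ae" "finite Ac"
  shows "finite (usc_experts T As Ae Ac)"
proof -
  have "finite (usc_grid T)" unfolding usc_grid_def by simp
  with assms show ?thesis
    unfolding usc_experts_def by (intro finite_UnI finite_imageI finite_image_set2) auto
qed

lemma card_usc_experts_ge_two:
  assumes "finite As" "finite Ae" "finite Ac" "A \<in> Ae" "2 \<le> T"
  shows "2 \<le> card (usc_experts T As Ae Ac)"
proof -
  have "log 2 2 \<le> log 2 (real T)" using assms(5) by (subst log_le_cancel_iff) auto
  then have "1 \<le> log 2 (real T)" by simp
  then have "1 \<le> usc_N T" unfolding usc_N_def by linarith
  moreover have "1 / real T = 2 ^ 0 / real T" "2 / real T = 2 ^ 1 / real T" by simp_all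
  ultimately have "1 / real T \<in> usc_grid T" "2 / real T \<in> usc_grid T"
    unfolding usc_grid_def by blast+
  then have sub: "{EExp A (1 / real T), EExp A (2 / real T)} \<subseteq> usc_experts T As Ae Ac"
    using assms(4) unfolding usc_experts_def by blast
  have "card {EExp A (1 / real T), EExp A (2 / real T)} = 2" using assms(5) by simp
  then show ?thesis using card_mono[OF finite_usc_experts[OF assms(1-3)] sub] by simp
qed

lemma usc_experts_in:
  assumes "0 < T" "\<forall>A\<in>As. \<forall>p>0. \<forall>h. A p h \<in> X" "\<forall>A\<in>Ae. \<forall>p>0. \<forall>h. A p h \<in> X" "\<forall>A\<in>Ac. \<forall>h. A h \<in> X"
    and "i \<in> usc_experts T As Ae Ac"
  shows "expert_out i h \<in> X"
  using assms usc_grid_pos[OF assms(1)] unfolding usc_experts_def by auto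

lemma one_less_ln: "3 \<le> x \<Longrightarrow> 1 < ln (x::real)"
  using ln_272_gt_1 ln_le_cancel_iff[of "272/100" x] by linarith

lemma usc_N_bounds:
  assumes "3 \<le> T"
  shows "ln (real T) \<le> real (usc_N T)" "real (usc_N T) \<le> 2 * ln (real T) + 1"
proof -
  have lnT: "1 < ln (real T)" using assms by (intro one_less_ln) simp
  have "log 2 (real T) = ln (real T) / ln 2" by (simp add: log_def)
  moreover have "ln (real T) / 1 \<le> ln (real T) / ln 2" "ln (real T) / ln 2 \<le> ln (real T) / (1/2)"
    using ln_2_less_1 ln2_ge_two_thirds lnT by (intro divide_left_mono; simp)+
  ultimately have "ln (real T) \<le> log 2 (real T)" "log 2 (real T) \<le> 2 * ln (real T)" by simp_all
  moreover have "real (usc_N T) = real_of_int \<lceil>log 2 (real T)\<rceil>"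
    unfolding usc_N_def using lnT calculation by simp
  ultimately show "ln (real T) \<le> real (usc_N T)" "real (usc_N T) \<le> 2 * ln (real T) + 1"
    using le_of_int_ceiling[of "log 2 (real T)"] of_int_ceiling_le_add_one[of "log 2 (real T)"]
    by linarith+
qed

lemma inverse_usc_beta_le:
  assumes "0 < G * D" "0 < \<alpha>" "\<alpha> \<le> 1"
  shows "1 / (2 * usc_beta G D \<alpha>) \<le> (4 * (G * D) + 1) / \<alpha>"
proof (cases "1 / (4 * (G * D)) \<le> \<alpha>")
  case True
  then have "1 / (2 * usc_beta G D \<alpha>) = 4 * (G * D)"
    using assms by (simp add: usc_beta_def min_def mult.assoc)
  also have "\<dots> \<le> 4 * (G * D) / \<alpha>" using assms by (simp add: le_divide_eq mult_left_le)
  also have "\<dots> \<le> (4 * (G * D) + 1) / \<alpha>" using assms by (intro divide_right_mono) auto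
  finally show ?thesis .
next
  case False
  then have "1 / (2 * usc_beta G D \<alpha>) = 1 / \<alpha>" by (simp add: usc_beta_def min_def mult.assoc)
  also have "\<dots> \<le> (4 * (G * D) + 1) / \<alpha>" using assms by (intro divide_right_mono) auto
  finally show ?thesis .
qed

lemma usc_add_le:
  assumes c: "1 \<le> ln (real n)" "\<Lambda> \<le> 2 * ln (real n)" and \<Lambda>: "0 < \<Lambda>"
    and \<Gamma>: "0 \<le> usc_Gamma n T" "usc_Gamma n T \<le> M * \<Lambda>"
    and \<alpha>: "0 < \<alpha>" "\<alpha> \<le> 1" and GD: "0 < G * D"
  shows "usc_add n T G D \<alpha> \<le> (6 * (G * D) * M + 2 * M^2 * (4 * (G * D) + 1)) * \<Lambda> / \<alpha>"
proof -
  define c where "c = ln (real n)"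
  define \<Gamma> where "\<Gamma> = usc_Gamma n T"
  have "0 \<le> M * \<Lambda>" using \<Gamma> by linarith
  then have M: "0 \<le> M" using \<Lambda> by (simp add: zero_le_mult_iff)
  have "1 / sqrt c \<le> 1" using c by (simp add: c_def)
  then have "2 * (G * D) * \<Gamma> * (2 + 1 / sqrt c) \<le> 2 * (G * D) * \<Gamma> * 3"
    using GD \<Gamma> by (intro mult_left_mono) (simp_all add: \<Gamma>_def)
  then have "2 * \<Gamma> * G * D * (2 + 1 / sqrt c) \<le> 2 * (G * D) * \<Gamma> * 3" by (simp add: mult_ac)
  also have "\<dots> \<le> 2 * (G * D) * (M * \<Lambda>) * 3"
    using \<Gamma> GD by (intro mult_right_mono mult_left_mono) (simp_all add: \<Gamma>_def)
  also have "\<dots> = 6 * (G * D) * M * \<Lambda>" by simp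
  also have "\<dots> \<le> 6 * (G * D) * M * \<Lambda> / \<alpha>"
    using GD M \<Lambda> \<alpha> by (simp add: le_divide_eq mult_left_le)
  finally have A: "2 * \<Gamma> * G * D * (2 + 1 / sqrt c) \<le> 6 * (G * D) * M * \<Lambda> / \<alpha>" .
  have "\<Gamma>^2 / c \<le> (M * \<Lambda>)^2 / (\<Lambda> / 2)"
    using \<Gamma> c \<Lambda> by (intro frac_le power_mono) (simp_all add: c_def \<Gamma>_def)
  also have "\<dots> = 2 * M^2 * \<Lambda>" using \<Lambda> by (simp add: power2_eq_square)
  finally have "\<Gamma>^2 / c * (1 / (2 * usc_beta G D \<alpha>)) \<le> 2 * M^2 * \<Lambda> * ((4 * (G * D) + 1) / \<alpha>)"
    using inverse_usc_beta_le[OF GD \<alpha>] GD \<alpha> \<Lambda>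
    by (intro mult_mono) (simp_all add: usc_beta_def mult.assoc)
  then have B: "\<Gamma>^2 / (2 * usc_beta G D \<alpha> * c) \<le> 2 * M^2 * (4 * (G * D) + 1) * \<Lambda> / \<alpha>"
    by (simp add: mult_ac)
  have "usc_add n T G D \<alpha> = 2 * \<Gamma> * G * D * (2 + 1 / sqrt c) + \<Gamma>^2 / (2 * usc_beta G D \<alpha> * c)"
    by (simp add: usc_add_def \<Gamma>_def c_def)
  also have "\<dots> \<le> (6 * (G * D) * M + 2 * M^2 * (4 * (G * D) + 1)) * \<Lambda> / \<alpha>"
    using A B by (simp add: add_divide_distrib distrib_right)
  finally show ?thesis .
qed

lemma usc_expert_count_bounds:
  assumes T: "3 \<le> T" and ne: "1 \<le> ne" and k: "ns \<le> k" "ne \<le> k" "nc \<le> k"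
  defines "n \<equiv> (ns + ne) * (usc_N T + 1) + nc"
  shows "3 \<le> real n" "ln (real T) \<le> real n" "real n \<le> 12 * (real k + 1) * ln (real T)"
proof -
  define N where "N = usc_N T"
  have lnT: "1 < ln (real T)" using T by (intro one_less_ln) simp
  have N: "ln (real T) \<le> real N" "real N \<le> 2 * ln (real T) + 1"
    using usc_N_bounds[OF T] by (simp_all add: N_def)
  have "N + 1 \<le> (ns + ne) * (N + 1)" using ne mult_le_mono1[of 1 "ns + ne" "N + 1"] by simp
  then have n_lo: "real N + 1 \<le> real n" unfolding n_def N_def by linarith
  moreover have "2 \<le> N" using N(1) lnT by linarith
  ultimately show "3 \<le> real n" by linarith
  show "ln (real T) \<le> real n" using n_lo N(1) by linarith
  have "real n = real (ns + ne) * (real N + 1) + real nc" by (simp add: n_def N_def algebra_simps)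
  also have "\<dots> \<le> (2 * (real k + 1)) * (real N + 1) + (real k + 1) * (real N + 1)"
  proof (intro add_mono mult_right_mono)
    show "real (ns + ne) \<le> 2 * (real k + 1)" using k by simp
    have "real nc \<le> real k + 1" using k by simp
    also have "\<dots> \<le> (real k + 1) * (real N + 1)" using mult_left_mono[of 1 "real N + 1" "real k + 1"] by simp
    finally show "real nc \<le> (real k + 1) * (real N + 1)" .
  qed simp
  also have "\<dots> = 3 * (real k + 1) * (real N + 1)" by (simp add: algebra_simps)
  also have "\<dots> \<le> 3 * (real k + 1) * (4 * ln (real T))" using N(2) lnT by (intro mult_left_mono) auto
  finally show "real n \<le> 12 * (real k + 1) * ln (real T)" by (simp add: algebra_simps)
qed

lemma usc_Gamma_le:
  fixes \<kappa> :: real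
  assumes T: "3 \<le> T" and n: "3 \<le> real n" "real n \<le> 12 * \<kappa> * ln (real T)" and \<kappa>: "1 \<le> \<kappa>"
  shows "usc_Gamma n T \<le> 3 * ln (12 * \<kappa>) + ln (37 * \<kappa>) + 5 * ln (ln (real T))"
proof -
  define Lg where "Lg = ln (real T)"
  have Lg: "1 < Lg" using T by (simp add: Lg_def one_less_ln)
  have "ln (real n) \<le> ln (12 * \<kappa> * Lg)" using n by (simp add: Lg_def)
  also have "\<dots> = ln (12 * \<kappa>) + ln Lg" using \<kappa> Lg by (simp add: ln_mult)
  finally have c: "ln (real n) \<le> ln (12 * \<kappa>) + ln Lg" .
  have "ln (real T + 1) \<le> ln (2 * real T)" using T by simp
  also have "\<dots> = ln 2 + Lg" using T by (simp add: ln_mult Lg_def)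
  finally have "1 + ln (real T + 1) \<le> 3 * Lg" using ln_2_less_1 Lg by linarith
  moreover have "real n / (2 * exp 1) \<le> real n"
    using exp_ge_add_one_self[of 1] by (simp add: divide_le_eq mult_le_cancel_left1)
  ultimately have "real n / (2 * exp 1) * (1 + ln (real T + 1)) \<le> real n * (3 * Lg)"
    by (intro mult_mono) (auto intro: add_nonneg_nonneg)
  also have "\<dots> \<le> (12 * \<kappa> * Lg) * (3 * Lg)" using n Lg by (intro mult_right_mono) (auto simp: Lg_def)
  finally have "1 + real n / (2 * exp 1) * (1 + ln (real T + 1)) \<le> 1 + 36 * \<kappa> * Lg^2"
    by (simp add: power2_eq_square algebra_simps)
  also have "\<dots> \<le> 37 * \<kappa> * Lg^2"
    using \<kappa> Lg mult_mono[of 1 \<kappa> 1 "Lg^2"] by (simp add: one_le_power)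
  finally have "ln (1 + real n / (2 * exp 1) * (1 + ln (real T + 1))) \<le> ln (37 * \<kappa> * Lg^2)"
    by (intro ln_mono) (auto intro: add_pos_nonneg)
  also have "\<dots> = ln (37 * \<kappa>) + 2 * ln Lg" using \<kappa> Lg by (simp add: ln_mult ln_realpow)
  finally show ?thesis using c by (simp add: usc_Gamma_def Lg_def)
qed

lemma usc_add_ln_ln_bound:
  assumes G: "0 < G" and D: "0 < D"
  shows "\<forall>k::nat. \<exists>C::real. \<forall>T'::nat. \<forall>\<alpha>'::real. \<forall>ns ne nc :: nat.
            T' \<ge> 3 \<and> 1 / real T' \<le> \<alpha>' \<and> \<alpha>' \<le> 1 \<and> 1 \<le> ne \<and> ns \<le> k \<and> ne \<le> k \<and> nc \<le> k
            \<longrightarrow> usc_add ((ns + ne) * (usc_N T' + 1) + nc) T' G D \<alpha>' \<le> C * ln (ln (real T')) / \<alpha>'"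
proof
  fix k :: nat
  define \<kappa> where "\<kappa> = real k + 1"
  define M where "M = 3 * ln (12 * \<kappa>) + ln (37 * \<kappa>) + 5"
  define Q where "Q = 1 + 1 / ln (ln (3::real))"
  define P where "P = 6 * (G * D) * M + 2 * M^2 * (4 * (G * D) + 1)"
  have \<kappa>: "1 \<le> \<kappa>" by (simp add: \<kappa>_def)
  have M: "0 \<le> M" using \<kappa> by (simp add: M_def)
  have lnln3: "0 < ln (ln (3::real))" using one_less_ln[of 3] by simp
  show "\<exists>C::real. \<forall>T'::nat. \<forall>\<alpha>'::real. \<forall>ns ne nc :: nat.
            T' \<ge> 3 \<and> 1 / real T' \<le> \<alpha>' \<and> \<alpha>' \<le> 1 \<and> 1 \<le> ne \<and> ns \<le> k \<and> ne \<le> k \<and> nc \<le> k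
            \<longrightarrow> usc_add ((ns + ne) * (usc_N T' + 1) + nc) T' G D \<alpha>' \<le> C * ln (ln (real T')) / \<alpha>'"
  proof (intro exI[of _ "Q * P"] allI impI, elim conjE)
    fix T' :: nat and \<alpha> :: real and ns ne nc :: nat
    assume T: "3 \<le> T'" and \<alpha>: "1 / real T' \<le> \<alpha>" "\<alpha> \<le> 1" and ne: "1 \<le> ne"
      and k: "ns \<le> k" "ne \<le> k" "nc \<le> k"
    define n where "n = (ns + ne) * (usc_N T' + 1) + nc"
    define lnlnT where "lnlnT = ln (ln (real T'))"
    note n = usc_expert_count_bounds[OF T ne k, folded n_def]
    have "ln (ln 3) \<le> lnlnT"
      using T one_less_ln[of 3] by (simp add: lnlnT_def)
    then have "0 < lnlnT" "1 \<le> lnlnT / ln (ln 3)" using lnln3 by (linarith, simp)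
    then have lnlnT: "0 < lnlnT" "1 + lnlnT \<le> Q * lnlnT" by (simp_all add: Q_def algebra_simps)
    have "1 < ln (real n)" using n(1) by (rule one_less_ln)
    moreover have "lnlnT \<le> ln (real n)"
      using n(2) T one_less_ln[of "real T'"] by (simp add: lnlnT_def)
    moreover have "0 \<le> usc_Gamma n T'" using n(1) by (simp add: usc_Gamma_def)
    moreover have "usc_Gamma n T' \<le> M * (1 + lnlnT)"
    proof -
      define A where "A = 3 * ln (12 * \<kappa>) + ln (37 * \<kappa>)"
      have "usc_Gamma n T' \<le> A + 5 * lnlnT"
        using usc_Gamma_le[OF T n(1) n(3)[folded \<kappa>_def] \<kappa>] by (simp add: A_def lnlnT_def)
      moreover have "0 \<le> A * lnlnT" using \<kappa> lnlnT by (simp add: A_def)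
      moreover have "M * (1 + lnlnT) = A + 5 * lnlnT + (A * lnlnT + 5)"
        by (simp add: M_def A_def algebra_simps)
      ultimately show ?thesis by linarith
    qed
    moreover have "0 < \<alpha>" using \<alpha>(1) T by (simp add: less_le_trans[OF _ \<alpha>(1)])
    ultimately have "usc_add n T' G D \<alpha> \<le> P * (1 + lnlnT) / \<alpha>"
      using usc_add_le[of n "1 + lnlnT" T' M \<alpha> G D] \<alpha>(2) G D lnlnT(1) by (simp add: P_def)
    also have "\<dots> \<le> P * (Q * lnlnT) / \<alpha>"
      using lnlnT \<open>0 < \<alpha>\<close> G D M by (intro divide_right_mono mult_left_mono) (simp_all add: P_def)
    finally show "usc_add ((ns + ne) * (usc_N T' + 1) + nc) T' G D \<alpha> \<le> Q * P * ln (ln (real T')) / \<alpha>"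
      by (simp add: n_def lnlnT_def mult_ac)
  qed
qed

theorem theorem2:
  fixes X :: "'a::euclidean_space set"
    and D G :: real and T :: nat
    and f :: "nat \<Rightarrow> 'a \<Rightarrow> real" and g :: "nat \<Rightarrow> 'a \<Rightarrow> 'a"
    and As Ae :: "'a palg set" and Ac :: "'a alg set"
    and R :: "'a palg \<Rightarrow> real \<Rightarrow> real"
    and xbar :: 'a and \<alpha> \<alpha>h :: real
  assumes T2: "T \<ge> 2"
    and dom: "oco_domain X D" and Dpos: "D > 0" and Gpos: "G > 0"
    and fns: "oco_fns X G T f g"
    and fin: "finite As" "finite Ae" "finite Ac" and Ae_ne: "Ae \<noteq> {}"
    and As_out: "\<forall>A\<in>As. \<forall>p>0. \<forall>h. A p h \<in> X"
    and Ae_out: "\<forall>A\<in>Ae. \<forall>p>0. \<forall>h. A p h \<in> X"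
    and Ac_out: "\<forall>A\<in>Ac. \<forall>h. A h \<in> X"
    and R_bound: "\<forall>A\<in>Ae. \<forall>a>0. \<forall>f' g'.
        oco_fns X G T f' g' \<and> (\<forall>t\<in>{1..T}. exp_concave_on a X (f' t))
        \<longrightarrow> regret X T f' (\<lambda>t. A a (hist f' t)) \<le> R A a"
    and xbar: "xbar \<in> X"
    and \<alpha>: "1 / real T \<le> \<alpha>" "\<alpha> \<le> 1"
    and expc: "\<forall>t\<in>{1..T}. exp_concave_on \<alpha> X (f t)"
    and \<alpha>h: "\<alpha>h \<in> usc_grid T" "\<alpha>h \<le> \<alpha>" "\<alpha> \<le> 2 * \<alpha>h"
  shows "regret X T f (usc_x (usc_experts T As Ae Ac) f g G D xbar)
           \<le> (MIN A\<in>Ae. R A \<alpha>h) + usc_add (card (usc_experts T As Ae Ac)) T G D \<alpha>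
       \<and> (\<forall>k::nat. \<exists>C::real. \<forall>T'::nat. \<forall>\<alpha>'::real. \<forall>ns ne nc :: nat.
            T' \<ge> 3 \<and> 1 / real T' \<le> \<alpha>' \<and> \<alpha>' \<le> 1 \<and> 1 \<le> ne \<and> ns \<le> k \<and> ne \<le> k \<and> nc \<le> k
            \<longrightarrow> usc_add ((ns + ne) * (usc_N T' + 1) + nc) T' G D \<alpha>' \<le> C * ln (ln (real T')) / \<alpha>')"
proof
  define E where "E = usc_experts T As Ae Ac"
  have "(MIN A\<in>Ae. R A \<alpha>h) \<in> (\<lambda>A. R A \<alpha>h) ` Ae" using fin(2) Ae_ne by (intro Min_in) auto
  then obtain A where A: "A \<in> Ae" "R A \<alpha>h = (MIN A\<in>Ae. R A \<alpha>h)" by auto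
  have \<alpha>h_pos: "0 < \<alpha>h" using \<alpha>h(1) T2 by (intro usc_grid_pos[of T]) auto
  interpret usc_run X D G T f g E xbar
    using dom Dpos Gpos fns finite_usc_experts[OF fin] card_usc_experts_ge_two[OF fin A(1) T2]
      usc_experts_in[OF _ As_out Ae_out Ac_out, of T] xbar T2
    by unfold_locales (auto simp: E_def)
  have "EExp A \<alpha>h \<in> E" using A(1) \<alpha>h(1) by (auto simp: E_def usc_experts_def)
  moreover have "0 < \<alpha>" using \<alpha>h(2) \<alpha>h_pos by simp
  ultimately have "(\<Sum>t=1..T. f t (pred t)) - (\<Sum>t=1..T. f t (A \<alpha>h (hist f t))) \<le> usc_add (card E) T G D \<alpha>"
    using regret_vs_expert[of "EExp A \<alpha>h"] expc by simp
  moreover have "regret X T f (\<lambda>t. A \<alpha>h (hist f t)) \<le> R A \<alpha>h"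
    using R_bound A(1) \<alpha>h_pos fns expc exp_concave_on_mono[OF _ \<alpha>h_pos \<alpha>h(2)] by blast
  ultimately show "regret X T f (usc_x E f g G D xbar) \<le> (MIN A\<in>Ae. R A \<alpha>h) + usc_add (card E) T G D \<alpha>"
    using A(2) by (simp add: regret_def)
next
  show "\<forall>k::nat. \<exists>C::real. \<forall>T'::nat. \<forall>\<alpha>'::real. \<forall>ns ne nc :: nat.
            T' \<ge> 3 \<and> 1 / real T' \<le> \<alpha>' \<and> \<alpha>' \<le> 1 \<and> 1 \<le> ne \<and> ns \<le> k \<and> ne \<le> k \<and> nc \<le> k
            \<longrightarrow> usc_add ((ns + ne) * (usc_N T' + 1) + nc) T' G D \<alpha>' \<le> C * ln (ln (real T')) / \<alpha>'"
    by (rule usc_add_ln_ln_bound[OF Gpos Dpos])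
qed

end
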